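(* Let $f$ be a homeomorphism of a compact manifold $X$ of dimension at least $2$ (with a metric $d$ compatible with its topology) and let $x\in X$ be a minimally expansive point of $f$. Then $x$ is a shadowable point of $f$ if and only if $x$ is a topologically stable point of $f$.
   Context: $f$ is expansive on $A\subset X$ with constant $\mathfrak{c}$ if for all distinct $a,b\in A$ there is $n\in\mathbb{Z}$ with $d(f^n(a),f^n(b))>\mathfrak{c}$. $x$ is minimally expansive for $f$ if there is $\mathfrak{c}>0$ such that for each $y$ with $d(x,y)<\mathfrak{c}$, $f$ is expansive on $\overline{\mathcal{O}_f(y)}$ with constant $\mathfrak{c}$, where $\mathcal{O}_f(y)=\{f^n(y):n\in\mathbb{Z}\}$. A $\delta$-pseudo orbit for $f$ through $x$ is $\{x_n\}_{n\in\mathbb{Z}}$ with $x_0=x$, $d(f(x_n),x_{n+1})<\delta$ for all $n$; $x$ is shadowable if for every $\epsilon>0$ there is $\delta>0$ such that every $\delta$-pseudo orbit through $x$ admits $y\in X$ with $d(f^n(y),x_n)<\epsilon$ for all $n\in\mathbb{Z}$. $x$ is a topologically stable point of $f$ if for every $\epsilon>0$ there is $\delta>0$ such that for every homeomorphism $g$ of $X$ with $\sup_{z}d(f(z),g(z))\le\delta$ there is a continuous $h:\overline{\mathcal{O}_g(x)}\to X$ with $f\circ h=h\circ g$ and $d(h(z),z)\le\epsilon$ for all $z\in\overline{\mathcal{O}_g(x)}$. *)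

theory Defs
  imports "HOL-Analysis.Analysis"
begin

definition iterz :: "'a set \<Rightarrow> ('a \<Rightarrow> 'a) \<Rightarrow> int \<Rightarrow> 'a \<Rightarrow> 'a" where
  "iterz X f n = (if 0 \<le> n then f ^^ nat n else inv_into X f ^^ nat (- n))"

definition orbit :: "'a set \<Rightarrow> ('a \<Rightarrow> 'a) \<Rightarrow> 'a \<Rightarrow> 'a set" where
  "orbit X f y = {iterz X f n y | n. True}"

definition is_homeo :: "'a::topological_space set \<Rightarrow> ('a \<Rightarrow> 'a) \<Rightarrow> bool" where
  "is_homeo X f \<longleftrightarrow> (\<exists>g. homeomorphism X X f g)"

text \<open>Topological manifold of dimension DIM('b) (locally Euclidean; Hausdorff and
  second countability are automatic for a compact metric space).\<close>
definition is_manifold_dim :: "'a::metric_space set \<Rightarrow> 'b::euclidean_space itself \<Rightarrow> bool" where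
  "is_manifold_dim X _ \<longleftrightarrow>
     (\<forall>x\<in>X. \<exists>U (V::'b set). openin (top_of_set X) U \<and> x \<in> U \<and> open V \<and> V homeomorphic U)"

definition expansive_on :: "'a::metric_space set \<Rightarrow> ('a \<Rightarrow> 'a) \<Rightarrow> 'a set \<Rightarrow> real \<Rightarrow> bool" where
  "expansive_on X f A c \<longleftrightarrow>
     (\<forall>a\<in>A. \<forall>b\<in>A. a \<noteq> b \<longrightarrow> (\<exists>n::int. dist (iterz X f n a) (iterz X f n b) > c))"

definition minimally_expansive :: "'a::metric_space set \<Rightarrow> ('a \<Rightarrow> 'a) \<Rightarrow> 'a \<Rightarrow> bool" where
  "minimally_expansive X f x \<longleftrightarrow>
     (\<exists>c>0. \<forall>y\<in>X. dist x y < c \<longrightarrow> expansive_on X f (closure (orbit X f y)) c)"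

definition pseudo_orbit_through ::
    "'a::metric_space set \<Rightarrow> ('a \<Rightarrow> 'a) \<Rightarrow> real \<Rightarrow> 'a \<Rightarrow> (int \<Rightarrow> 'a) \<Rightarrow> bool" where
  "pseudo_orbit_through X f \<delta> x xs \<longleftrightarrow>
     (\<forall>n. xs n \<in> X) \<and> xs 0 = x \<and> (\<forall>n. dist (f (xs n)) (xs (n + 1)) < \<delta>)"

definition shadowable_point :: "'a::metric_space set \<Rightarrow> ('a \<Rightarrow> 'a) \<Rightarrow> 'a \<Rightarrow> bool" where
  "shadowable_point X f x \<longleftrightarrow>
     (\<forall>\<epsilon>>0. \<exists>\<delta>>0. \<forall>xs. pseudo_orbit_through X f \<delta> x xs \<longrightarrow>
        (\<exists>y\<in>X. \<forall>n. dist (iterz X f n y) (xs n) < \<epsilon>))"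

definition topologically_stable_point :: "'a::metric_space set \<Rightarrow> ('a \<Rightarrow> 'a) \<Rightarrow> 'a \<Rightarrow> bool" where
  "topologically_stable_point X f x \<longleftrightarrow>
     (\<forall>\<epsilon>>0. \<exists>\<delta>>0. \<forall>g. is_homeo X g \<and> (\<forall>z\<in>X. dist (f z) (g z) \<le> \<delta>) \<longrightarrow>
        (\<exists>h. continuous_on (closure (orbit X g x)) h \<and> h ` closure (orbit X g x) \<subseteq> X \<and>
             (\<forall>z\<in>closure (orbit X g x). f (h z) = h (g z)) \<and>
             (\<forall>z\<in>closure (orbit X g x). dist (h z) z \<le> \<epsilon>)))"

end

(* Shadowable => stable: if g is C0-close to f, the g-orbit of x is a pseudo-orbit of f, hence
   shadowed by the f-orbit of a point y near x.  Minimal expansivity makes f expansive on the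
   orbit closure of y, so every point z of the g-orbit closure of x has exactly one f-shadow h z in
   that orbit closure; uniqueness gives f o h = h o g, and h is continuous because its graph is the
   compact set of shadowing pairs.

   Stable => shadowable: on a compact manifold of dimension at least 2, finitely many points can be
   moved simultaneously to nearby targets by a homeomorphism C0-close to the identity (cover by
   finitely many charts, sort the moves into boundedly many families of pairwise disjoint small
   cells, and move points inside each cell, which is possible because the homeomorphisms of a
   connected open subset of R^n, n >= 2, act transitively on finite configurations).  After making
   a finite piece of a pseudo-orbit injective by a small perturbation, this yields a homeomorphism
   g close to f having that piece as a true orbit segment; topological stability maps it to an
   f-orbit segment, and compactness passes from finite pieces to the whole pseudo-orbit. *)

theory Submission
  imports Defs
begin

section \<open>Integer iterates and orbit closures\<close>

lemma is_homeo_homeomorphism_inv_into: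
  assumes "is_homeo X f"
  shows "homeomorphism X X f (inv_into X f)"
proof -
  obtain f' where hf: "homeomorphism X X f f'" using assms unfolding is_homeo_def by blast
  have "inv_into X f y = f' y" if "y \<in> X" for y
  proof -
    have "f' y \<in> X" "f (f' y) = y" using hf that by (auto simp: homeomorphism_def)
    moreover have "inj_on f X" using hf by (metis homeomorphism_apply1 inj_on_inverseI)
    ultimately show ?thesis by (metis inv_into_f_f)
  qed
  then show ?thesis by (intro homeomorphism_cong[OF hf]) auto
qed

lemma homeomorphism_imp_is_homeo: "homeomorphism X X f f' \<Longrightarrow> is_homeo X f"
  unfolding is_homeo_def by blast

lemma iterz_0 [simp]: "iterz X f 0 = id"
  by (simp add: iterz_def)

lemma iterz_1 [simp]: "iterz X f 1 = f"
  by (simp add: iterz_def)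

lemma iterz_nonneg: "iterz X f (int k) = f ^^ k"
  by (simp add: iterz_def)

lemma iterz_neg: "iterz X f (- int k) = inv_into X f ^^ k"
  unfolding iterz_def by (cases "k = 0") simp_all

lemma iterz_in:
  assumes "is_homeo X f" "z \<in> X"
  shows "iterz X f n z \<in> X"
proof -
  have "f ` X \<subseteq> X" "inv_into X f ` X \<subseteq> X"
    using is_homeo_homeomorphism_inv_into[OF assms(1)] by (auto simp: homeomorphism_def)
  then have "(f ^^ k) z \<in> X" "(inv_into X f ^^ k) z \<in> X" for k
    by (induction k) (use assms(2) in auto)
  then show ?thesis by (simp add: iterz_def)
qed

lemma iterz_succ:
  assumes "is_homeo X f" "z \<in> X"
  shows "iterz X f (n + 1) z = f (iterz X f n z)"
proof (cases "0 \<le> n")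
  case True
  then show ?thesis by (simp add: iterz_def nat_add_distrib)
next
  case False
  define k where "k = nat (- (n + 1))"
  have n: "n = - int (Suc k)" and n1: "n + 1 = - int k" using False by (auto simp: k_def)
  have "iterz X f n z = inv_into X f ((inv_into X f ^^ k) z)" unfolding n iterz_neg by simp
  also have "(inv_into X f ^^ k) z = iterz X f (n + 1) z" unfolding n1 iterz_neg ..
  finally have "iterz X f n z = inv_into X f (iterz X f (n + 1) z)" .
  moreover have "iterz X f (n + 1) z \<in> X" by (rule iterz_in[OF assms])
  ultimately show ?thesis using is_homeo_homeomorphism_inv_into[OF assms(1)] by (simp add: homeomorphism_apply2)
qed

lemma iterz_pred:
  assumes "is_homeo X f" "z \<in> X"
  shows "iterz X f (n - 1) z = inv_into X f (iterz X f n z)"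
  using iterz_succ[OF assms, of "n - 1"] iterz_in[OF assms, of "n - 1"]
    is_homeo_homeomorphism_inv_into[OF assms(1)] by (simp add: homeomorphism_apply1)

lemma iterz_add:
  assumes "is_homeo X f" "z \<in> X"
  shows "iterz X f (m + n) z = iterz X f m (iterz X f n z)"
proof (induction m rule: int_induct[where k = 0])
  case (step1 i)
  have "iterz X f (i + 1 + n) z = f (iterz X f (i + n) z)"
    using iterz_succ[OF assms, of "i + n"] by (simp add: ac_simps)
  also have "\<dots> = iterz X f (i + 1) (iterz X f n z)"
    using step1 iterz_succ[OF assms(1) iterz_in[OF assms]] by simp
  finally show ?case .
next
  case (step2 i)
  have "iterz X f (i - 1 + n) z = inv_into X f (iterz X f (i + n) z)"
    using iterz_pred[OF assms, of "i + n"] by (simp add: algebra_simps)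
  also have "\<dots> = iterz X f (i - 1) (iterz X f n z)"
    using step2 iterz_pred[OF assms(1) iterz_in[OF assms]] by simp
  finally show ?case .
qed simp

lemma iterz_succ_right:
  assumes "is_homeo X f" "z \<in> X"
  shows "iterz X f n (f z) = iterz X f (n + 1) z"
  using iterz_add[OF assms, of n 1] by simp

lemma continuous_on_iterz:
  assumes "is_homeo X f"
  shows "continuous_on X (iterz X f n)"
proof -
  have "continuous_on X (g ^^ k)" if "continuous_on X g" "g ` X \<subseteq> X" for g :: "'a \<Rightarrow> 'a" and k
  proof (induction k)
    case (Suc k)
    have "(g ^^ k) ` X \<subseteq> X" using that(2) by (induction k) auto
    then show ?case using Suc that by (auto intro: continuous_on_compose2)
  qed (simp add: continuous_on_id)
  then show ?thesis
    using is_homeo_homeomorphism_inv_into[OF assms] by (simp add: iterz_def homeomorphism_def)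
qed

lemma orbit_subset:
  assumes "is_homeo X f" "y \<in> X"
  shows "orbit X f y \<subseteq> X"
  using iterz_in[OF assms] by (auto simp: orbit_def)

lemma iterz_in_closure_orbit: "iterz X f n y \<in> closure (orbit X f y)"
  by (auto simp: orbit_def intro: closure_subset[THEN subsetD])

lemma compact_closure_orbit:
  fixes X :: "'a::metric_space set"
  assumes "compact X" "is_homeo X f" "y \<in> X"
  shows "compact (closure (orbit X f y))" "closure (orbit X f y) \<subseteq> X"
proof -
  show sub: "closure (orbit X f y) \<subseteq> X"
    using orbit_subset[OF assms(2,3)] compact_imp_closed[OF assms(1)] by (rule closure_minimal)
  show "compact (closure (orbit X f y))"
    using compact_Int_closed[OF assms(1) closed_closure, of "orbit X f y"] sub
    by (simp add: Int_absorb1)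
qed

lemma iterz_closure_orbit:
  fixes X :: "'a::metric_space set"
  assumes "compact X" "is_homeo X f" "y \<in> X" "w \<in> closure (orbit X f y)"
  shows "iterz X f n w \<in> closure (orbit X f y)"
proof -
  have "iterz X f n ` closure (orbit X f y) \<subseteq> closure (orbit X f y)"
  proof (rule image_closure_subset)
    show "continuous_on (closure (orbit X f y)) (iterz X f n)"
      using continuous_on_iterz[OF assms(2)] compact_closure_orbit[OF assms(1-3)]
      by (blast intro: continuous_on_subset)
    show "iterz X f n ` orbit X f y \<subseteq> closure (orbit X f y)"
      using iterz_add[OF assms(2,3)] iterz_in_closure_orbit
      by (auto simp: orbit_def simp flip: iterz_add[OF assms(2,3)])
  qed simp
  then show ?thesis using assms(4) by blast
qed

lemma conjugacy_iterz:
  assumes f: "is_homeo X f" and g: "is_homeo X g" and CX: "C \<subseteq> X" and hC: "h ` C \<subseteq> X"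
    and inv: "\<And>n z. z \<in> C \<Longrightarrow> iterz X g n z \<in> C"
    and conj: "\<And>z. z \<in> C \<Longrightarrow> f (h z) = h (g z)" and z: "z \<in> C"
  shows "iterz X f n (h z) = h (iterz X g n z)"
proof -
  have "(f ^^ k) (h w) = h ((g ^^ k) w)" if "w \<in> C" for k w
  proof (induction k)
    case (Suc k)
    then show ?case using conj[OF inv[OF that, of "int k", unfolded iterz_nonneg]] by simp
  qed simp
  then have pos: "iterz X f (int k) (h w) = h (iterz X g (int k) w)" if "w \<in> C" for k w
    using that by (simp add: iterz_nonneg)
  show ?thesis
  proof (cases "0 \<le> n")
    case True
    then show ?thesis using pos[OF z, of "nat n"] by simp
  next
    case False
    define w where "w = iterz X g n z"
    have w: "w \<in> C" "h w \<in> X" unfolding w_def using inv[OF z] hC by auto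
    have "iterz X g (- n) w = z" unfolding w_def using iterz_add[OF g, of z "- n" n] CX z by auto
    then have "iterz X f (- n) (h w) = h z" using pos[OF w(1), of "nat (- n)"] False by simp
    then have "iterz X f n (h z) = iterz X f (n + - n) (h w)" using iterz_add[OF f w(2)] by metis
    then show ?thesis by (simp add: w_def)
  qed
qed

lemma iterz_finite_orbit_segment:
  assumes g: "is_homeo X g" and xp: "\<And>n. \<bar>n\<bar> \<le> int N \<Longrightarrow> xp n \<in> X"
    and step: "\<And>n. - int N \<le> n \<Longrightarrow> n < int N \<Longrightarrow> g (xp n) = xp (n + 1)" and n: "\<bar>n\<bar> \<le> int N"
  shows "iterz X g n (xp 0) = xp n"
proof -
  have x0: "xp 0 \<in> X" using xp[of 0] by simp
  have pos: "iterz X g (int k) (xp 0) = xp (int k)" if "k \<le> N" for k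
    using that
  proof (induction k)
    case (Suc k)
    then show ?case using iterz_succ[OF g x0, of "int k"] step[of "int k"] by (simp add: add.commute)
  qed simp
  have neg: "iterz X g (- int k) (xp 0) = xp (- int k)" if "k \<le> N" for k
    using that
  proof (induction k)
    case (Suc k)
    have "xp (- int k - 1) \<in> X" "g (xp (- int k - 1)) = xp (- int k)"
      using xp[of "- int k - 1"] step[of "- int k - 1"] Suc.prems by auto
    then have "inv_into X g (xp (- int k)) = xp (- int k - 1)"
      using is_homeo_homeomorphism_inv_into[OF g] by (metis homeomorphism_apply1)
    moreover have "- int (Suc k) = - int k - 1" by simp
    moreover have "iterz X g (- int k) (xp 0) = xp (- int k)" using Suc by simp
    ultimately show ?case using iterz_pred[OF g x0, of "- int k"] by metis
  qed simp
  show ?thesis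
    using n pos[of "nat n"] neg[of "nat (- n)"] by (cases "0 \<le> n") auto
qed

section \<open>Shadowable points are topologically stable\<close>

lemma pseudo_orbit_of_close_homeo:
  assumes g: "is_homeo X g" and x: "x \<in> X" and close: "\<forall>z\<in>X. dist (f z) (g z) < \<delta>"
  shows "pseudo_orbit_through X f \<delta> x (\<lambda>n. iterz X g n x)"
  unfolding pseudo_orbit_through_def
  using iterz_in[OF g x] close by (simp add: iterz_succ[OF g x])

lemma expansive_on_shadow_unique:
  assumes "expansive_on X f D c" "w \<in> D" "w' \<in> D" "2 * e \<le> c"
    and "\<And>n. dist (iterz X f n w) (p n) \<le> e" "\<And>n. dist (iterz X f n w') (p n) \<le> e"
  shows "w = w'"
proof (rule ccontr)
  assume "w \<noteq> w'"
  then obtain n where "dist (iterz X f n w) (iterz X f n w') > c"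
    using assms(1-3) unfolding expansive_on_def by blast
  moreover have "dist (iterz X f n w) (iterz X f n w') \<le> 2 * e"
    using dist_triangle2[of "iterz X f n w" "iterz X f n w'" "p n"] assms(5,6)[of n] by linarith
  ultimately show False using assms(4) by linarith
qed

lemma tendsto_dist_le:
  fixes a b :: "nat \<Rightarrow> 'a::metric_space"
  assumes "a \<longlonglongrightarrow> a0" "b \<longlonglongrightarrow> b0" "\<And>k. dist (a k) (b k) \<le> e"
  shows "dist a0 b0 \<le> e"
  using assms(3) by (intro LIMSEQ_le_const2[OF tendsto_dist[OF assms(1,2)]]) auto

lemma shadowing_extends_to_orbit_closure:
  fixes X :: "'a::metric_space set"
  assumes X: "compact X" and f: "is_homeo X f" and g: "is_homeo X g" and "x \<in> X" "y \<in> X"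
    and shadow: "\<And>n. dist (iterz X f n y) (iterz X g n x) \<le> e"
    and z: "z \<in> closure (orbit X g x)"
  shows "\<exists>w\<in>closure (orbit X f y). \<forall>n. dist (iterz X f n w) (iterz X g n z) \<le> e"
proof -
  obtain s where s: "\<And>k. s k \<in> orbit X g x" "s \<longlonglongrightarrow> z"
    using z unfolding closure_sequential by blast
  then have "\<forall>k. \<exists>n. s k = iterz X g n x" by (auto simp: orbit_def)
  then obtain m where "s = (\<lambda>k. iterz X g (m k) x)" by metis
  with s(2) have m: "(\<lambda>k. iterz X g (m k) x) \<longlonglongrightarrow> z" by simp
  obtain w r where w: "w \<in> closure (orbit X f y)" "strict_mono r"
      "((\<lambda>k. iterz X f (m k) y) \<circ> r) \<longlonglongrightarrow> w"
    using seq_compactE[OF compact_imp_seq_compact[OF compact_closure_orbit(1)[OF X f \<open>y \<in> X\<close>]],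
        of "\<lambda>k. iterz X f (m k) y"] iterz_in_closure_orbit by blast
  have "dist (iterz X f n w) (iterz X g n z) \<le> e" for n
  proof (rule tendsto_dist_le)
    show "(\<lambda>k. iterz X f n (iterz X f (m (r k)) y)) \<longlonglongrightarrow> iterz X f n w"
      using w(3) compact_closure_orbit(2)[OF X f \<open>y \<in> X\<close>] w(1) iterz_in[OF f \<open>y \<in> X\<close>]
      by (intro continuous_on_tendsto_compose[OF continuous_on_iterz[OF f]]) (auto simp: o_def)
    show "(\<lambda>k. iterz X g n (iterz X g (m (r k)) x)) \<longlonglongrightarrow> iterz X g n z"
      using LIMSEQ_subseq_LIMSEQ[OF m w(2)] z compact_closure_orbit(2)[OF X g \<open>x \<in> X\<close>]
        iterz_in[OF g \<open>x \<in> X\<close>]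
      by (intro continuous_on_tendsto_compose[OF continuous_on_iterz[OF g]]) (auto simp: o_def)
    show "dist (iterz X f n (iterz X f (m (r k)) y)) (iterz X g n (iterz X g (m (r k)) x)) \<le> e" for k
      using shadow[of "n + m (r k)"] by (simp add: iterz_add[OF f \<open>y \<in> X\<close>] iterz_add[OF g \<open>x \<in> X\<close>])
  qed
  then show ?thesis using w(1) by blast
qed

lemma continuous_on_compact_graph:
  fixes h :: "'a::metric_space \<Rightarrow> 'b::metric_space"
  assumes "compact ((\<lambda>z. (z, h z)) ` C)"
  shows "continuous_on C h"
proof -
  have "inj_on fst ((\<lambda>z. (z, h z)) ` C)" by (auto simp: inj_on_def)
  then obtain k where k: "homeomorphism ((\<lambda>z. (z, h z)) ` C) C fst k"
    using homeomorphism_compact[OF assms continuous_on_fst[OF continuous_on_id]]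
    by (force simp: image_image)
  then have "continuous_on C (snd \<circ> k)"
    by (intro continuous_on_compose continuous_on_snd continuous_on_id) (auto simp: homeomorphism_def)
  moreover have "(snd \<circ> k) z = h z" if "z \<in> C" for z
    using k that unfolding homeomorphism_def by force
  ultimately show ?thesis by (rule continuous_on_eq)
qed

lemma compact_shadowing_pairs:
  fixes X :: "'a::metric_space set"
  assumes f: "is_homeo X f" and g: "is_homeo X g"
    and C: "compact C" "C \<subseteq> X" and D: "compact D" "D \<subseteq> X"
  shows "compact {p \<in> C \<times> D. \<forall>n. dist (iterz X f n (snd p)) (iterz X g n (fst p)) \<le> e}"
proof -
  define F where "F n p = dist (iterz X f n (snd p)) (iterz X g n (fst p))" for n p
  have "continuous_on (C \<times> D) (F n)" for n
    unfolding F_def using C(2) D(2)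
    by (intro continuous_on_dist continuous_on_compose2[OF continuous_on_iterz[OF f] continuous_on_snd]
        continuous_on_compose2[OF continuous_on_iterz[OF g] continuous_on_fst] continuous_on_id) auto
  then have "closed (C \<times> D \<inter> F n -` {..e})" for n
    using C(1) D(1) by (intro continuous_closed_preimage) (auto intro: compact_imp_closed compact_Times)
  then have "closed (\<Inter>n. C \<times> D \<inter> F n -` {..e})" by blast
  then have "compact (C \<times> D \<inter> (\<Inter>n. C \<times> D \<inter> F n -` {..e}))"
    using compact_Int_closed[OF compact_Times[OF C(1) D(1)]] by blast
  moreover have "C \<times> D \<inter> (\<Inter>n. C \<times> D \<inter> F n -` {..e}) =
      {p \<in> C \<times> D. \<forall>n. dist (iterz X f n (snd p)) (iterz X g n (fst p)) \<le> e}"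
    unfolding F_def by auto
  ultimately show ?thesis by simp
qed

lemma expansive_shadowing_conjugacy:
  fixes X :: "'a::metric_space set"
  assumes X: "compact X" and f: "is_homeo X f" and g: "is_homeo X g" and x: "x \<in> X" and y: "y \<in> X"
    and exp: "expansive_on X f (closure (orbit X f y)) c" and "2 * e \<le> c"
    and shadow: "\<And>n. dist (iterz X f n y) (iterz X g n x) \<le> e"
  shows "\<exists>h. continuous_on (closure (orbit X g x)) h \<and> h ` closure (orbit X g x) \<subseteq> X \<and>
    (\<forall>z\<in>closure (orbit X g x). f (h z) = h (g z)) \<and> (\<forall>z\<in>closure (orbit X g x). dist (h z) z \<le> e)"
proof -
  define C where "C = closure (orbit X g x)"
  define D where "D = closure (orbit X f y)"
  note C = compact_closure_orbit[OF X g x, folded C_def]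
  note D = compact_closure_orbit[OF X f y, folded D_def]
  define R where "R z w \<longleftrightarrow> w \<in> D \<and> (\<forall>n. dist (iterz X f n w) (iterz X g n z) \<le> e)" for z w
  have R_unique: "w = w'" if "R z w" "R z w'" for z w w'
    using that unfolding R_def D_def
    by (intro expansive_on_shadow_unique[OF exp _ _ \<open>2 * e \<le> c\<close>, where p = "\<lambda>n. iterz X g n z"]) blast+
  define h where "h z = (SOME w. R z w)" for z
  have hR: "R z (h z)" if "z \<in> C" for z
  proof -
    have "\<exists>w. R z w"
      using shadowing_extends_to_orbit_closure[OF X f g x y shadow that[unfolded C_def]]
      unfolding R_def D_def by blast
    then show ?thesis unfolding h_def by (rule someI_ex)
  qed
  have conj: "f (h z) = h (g z)" if z: "z \<in> C" for z
  proof (rule R_unique)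
    have "h z \<in> D" "h z \<in> X" "z \<in> X" using hR[OF z] D(2) z C(2) unfolding R_def by auto
    then show "R (g z) (f (h z))"
      using hR[OF z] iterz_closure_orbit[OF X f y, of "h z" 1, folded D_def]
      unfolding R_def by (simp add: iterz_succ_right[OF f] iterz_succ_right[OF g])
    show "R (g z) (h (g z))" using hR iterz_closure_orbit[OF X g x, of z 1, folded C_def] z by auto
  qed
  have "(\<lambda>z. (z, h z)) ` C = {p \<in> C \<times> D. R (fst p) (snd p)}"
  proof (intro equalityI subsetI)
    fix p assume "p \<in> {p \<in> C \<times> D. R (fst p) (snd p)}"
    then obtain z w where "p = (z, w)" "z \<in> C" "R z w" by auto
    moreover from this have "w = h z" using R_unique hR by blast
    ultimately show "p \<in> (\<lambda>z. (z, h z)) ` C" by blast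
  qed (use hR in \<open>auto simp: R_def\<close>)
  also have "\<dots> = {p \<in> C \<times> D. \<forall>n. dist (iterz X f n (snd p)) (iterz X g n (fst p)) \<le> e}"
    unfolding R_def by auto
  finally have "continuous_on C h"
    using compact_shadowing_pairs[OF f g C(1,2) D(1,2)] by (intro continuous_on_compact_graph) simp
  moreover note conj
  moreover have "h ` C \<subseteq> X" "\<forall>z\<in>C. dist (h z) z \<le> e"
    using hR D(2) unfolding R_def by (auto, metis iterz_0 id_apply)
  ultimately show ?thesis unfolding C_def by blast
qed

lemma shadowable_imp_topologically_stable:
  fixes X :: "'a::metric_space set"
  assumes X: "compact X" and f: "is_homeo X f" and x: "x \<in> X"
    and "minimally_expansive X f x" and "shadowable_point X f x"
  shows "topologically_stable_point X f x"
  unfolding topologically_stable_point_def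
proof (intro allI impI)
  fix \<epsilon> :: real assume "\<epsilon> > 0"
  obtain c where "c > 0" and exp: "\<And>y. y \<in> X \<Longrightarrow> dist x y < c \<Longrightarrow> expansive_on X f (closure (orbit X f y)) c"
    using \<open>minimally_expansive X f x\<close> unfolding minimally_expansive_def by blast
  define e where "e = min \<epsilon> (c / 2)"
  have e: "e > 0" "e \<le> \<epsilon>" "2 * e \<le> c" "e < c" using \<open>\<epsilon> > 0\<close> \<open>c > 0\<close> by (auto simp: e_def)
  obtain \<delta> where "\<delta> > 0" and shadow: "\<And>xs. pseudo_orbit_through X f \<delta> x xs \<Longrightarrow>
      \<exists>y\<in>X. \<forall>n. dist (iterz X f n y) (xs n) < e"
    using \<open>shadowable_point X f x\<close> e(1) unfolding shadowable_point_def by blast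
  show "\<exists>\<delta>>0. \<forall>g. is_homeo X g \<and> (\<forall>z\<in>X. dist (f z) (g z) \<le> \<delta>) \<longrightarrow>
      (\<exists>h. continuous_on (closure (orbit X g x)) h \<and> h ` closure (orbit X g x) \<subseteq> X \<and>
        (\<forall>z\<in>closure (orbit X g x). f (h z) = h (g z)) \<and> (\<forall>z\<in>closure (orbit X g x). dist (h z) z \<le> \<epsilon>))"
  proof (intro exI[of _ "\<delta> / 2"] conjI allI impI)
    fix g assume g: "is_homeo X g \<and> (\<forall>z\<in>X. dist (f z) (g z) \<le> \<delta> / 2)"
    then have "pseudo_orbit_through X f \<delta> x (\<lambda>n. iterz X g n x)"
      using \<open>\<delta> > 0\<close> by (intro pseudo_orbit_of_close_homeo[OF _ x]) force+
    then obtain y where y: "y \<in> X" and yx: "\<And>n. dist (iterz X f n y) (iterz X g n x) < e"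
      using shadow by blast
    have "dist x y < c" using yx[of 0] e by (simp add: dist_commute)
    then obtain h where "continuous_on (closure (orbit X g x)) h" "h ` closure (orbit X g x) \<subseteq> X"
        "\<forall>z\<in>closure (orbit X g x). f (h z) = h (g z)" "\<forall>z\<in>closure (orbit X g x). dist (h z) z \<le> e"
      using expansive_shadowing_conjugacy[OF X f _ x y exp[OF y] e(3), of g] yx g less_imp_le by blast
    with e(2) show "\<exists>h. continuous_on (closure (orbit X g x)) h \<and> h ` closure (orbit X g x) \<subseteq> X \<and>
        (\<forall>z\<in>closure (orbit X g x). f (h z) = h (g z)) \<and> (\<forall>z\<in>closure (orbit X g x). dist (h z) z \<le> \<epsilon>)"
      by (meson order_trans)
  qed (use \<open>\<delta> > 0\<close> in simp)
qed

section \<open>Grid cells in Euclidean space\<close>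

text \<open>The grid cell of mesh \<open>s\<close> with integer coordinates \<open>k\<close>, enlarged by \<open>s/4\<close> on each side:
  it contains the \<open>s/4\<close>-neighbourhood of each point of the cell, and two such boxes whose
  indices have the same parity in every coordinate are equal or disjoint.\<close>

definition cell_lo :: "real \<Rightarrow> ('b::euclidean_space \<Rightarrow> int) \<Rightarrow> 'b" where
  "cell_lo s k = (\<Sum>j\<in>Basis. ((real_of_int (k j) - 1/4) * s) *\<^sub>R j)"

definition cell_hi :: "real \<Rightarrow> ('b::euclidean_space \<Rightarrow> int) \<Rightarrow> 'b" where
  "cell_hi s k = (\<Sum>j\<in>Basis. ((real_of_int (k j) + 5/4) * s) *\<^sub>R j)"

definition cell_index :: "real \<Rightarrow> 'b::euclidean_space \<Rightarrow> 'b \<Rightarrow> int" where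
  "cell_index s u = (\<lambda>j. \<lfloor>(u \<bullet> j) / s\<rfloor>)"

lemma mem_cell_box:
  "v \<in> box (cell_lo s k) (cell_hi s k) \<longleftrightarrow>
     (\<forall>j\<in>Basis. (real_of_int (k j) - 1/4) * s < v \<bullet> j \<and> v \<bullet> j < (real_of_int (k j) + 5/4) * s)"
  "v \<in> cbox (cell_lo s k) (cell_hi s k) \<longleftrightarrow>
     (\<forall>j\<in>Basis. (real_of_int (k j) - 1/4) * s \<le> v \<bullet> j \<and> v \<bullet> j \<le> (real_of_int (k j) + 5/4) * s)"
  by (simp_all add: mem_box cell_lo_def cell_hi_def inner_sum_left_Basis)

lemma cell_box_cong:
  "(\<And>j. j \<in> Basis \<Longrightarrow> k j = k' j) \<Longrightarrow> box (cell_lo s k) (cell_hi s k) = box (cell_lo s k') (cell_hi s k')"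
  unfolding cell_lo_def cell_hi_def by (intro arg_cong2[where f = box] sum.cong) auto

lemma cell_box_index:
  fixes u w :: "'b::euclidean_space"
  assumes "s > 0" and "dist u w < s / 4"
  shows "u \<in> box (cell_lo s (cell_index s u)) (cell_hi s (cell_index s u))"
    and "w \<in> box (cell_lo s (cell_index s u)) (cell_hi s (cell_index s u))"
proof -
  have "(real_of_int (cell_index s u j) - 1/4) * s < v \<bullet> j \<and> v \<bullet> j < (real_of_int (cell_index s u j) + 5/4) * s"
    if "j \<in> Basis" "v \<in> {u, w}" for j v
  proof -
    have "real_of_int \<lfloor>(u \<bullet> j) / s\<rfloor> * s \<le> u \<bullet> j" "u \<bullet> j < (real_of_int \<lfloor>(u \<bullet> j) / s\<rfloor> + 1) * s"
      using floor_divide_lower[OF assms(1)] floor_divide_upper[OF assms(1)] by auto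
    moreover have "\<bar>v \<bullet> j - u \<bullet> j\<bar> < s / 4"
      using Basis_le_norm[OF that(1), of "v - u"] assms that(2)
      by (auto simp: dist_norm norm_minus_commute inner_diff_left)
    ultimately show ?thesis
      unfolding cell_index_def abs_less_iff left_diff_distrib distrib_right by linarith
  qed
  then show "u \<in> box (cell_lo s (cell_index s u)) (cell_hi s (cell_index s u))"
    and "w \<in> box (cell_lo s (cell_index s u)) (cell_hi s (cell_index s u))"
    unfolding mem_cell_box by auto
qed

lemma cell_box_diameter:
  fixes v v' :: "'b::euclidean_space"
  assumes "v \<in> cbox (cell_lo s k) (cell_hi s k)" "v' \<in> cbox (cell_lo s k) (cell_hi s k)"
  shows "dist v v' \<le> 3 / 2 * s * DIM('b)"
proof -
  have "\<bar>(v - v') \<bullet> j\<bar> \<le> 3 / 2 * s" if "j \<in> Basis" for j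
  proof -
    have "(real_of_int (k j) - 1/4) * s \<le> v \<bullet> j" "v \<bullet> j \<le> (real_of_int (k j) + 5/4) * s"
      "(real_of_int (k j) - 1/4) * s \<le> v' \<bullet> j" "v' \<bullet> j \<le> (real_of_int (k j) + 5/4) * s"
      using assms that unfolding mem_cell_box by auto
    then show ?thesis unfolding inner_diff_left abs_le_iff by (simp add: algebra_simps)
  qed
  then have "(\<Sum>j\<in>Basis. \<bar>(v - v') \<bullet> j\<bar>) \<le> (\<Sum>j\<in>(Basis::'b set). 3 / 2 * s)" by (rule sum_mono)
  then have "norm (v - v') \<le> (\<Sum>j\<in>(Basis::'b set). 3 / 2 * s)" using norm_le_l1[of "v - v'"] by linarith
  then show ?thesis by (simp add: dist_norm mult.commute)
qed

lemma closure_cell_box_subset_cball: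
  fixes c u :: "'b::euclidean_space"
  assumes "3 / 2 * s * DIM('b) \<le> r" "u \<in> ball c r" "u \<in> box (cell_lo s k) (cell_hi s k)"
  shows "closure (box (cell_lo s k) (cell_hi s k)) \<subseteq> cball c (2 * r)"
proof
  fix v assume "v \<in> closure (box (cell_lo s k) (cell_hi s k))"
  then have "v \<in> cbox (cell_lo s k) (cell_hi s k)" using assms(3) by (metis closure_box empty_iff)
  then have "dist u v \<le> r" using cell_box_diameter[of u s k v] assms(1,3) box_subset_cbox by fastforce
  then show "v \<in> cball c (2 * r)" using assms(2) dist_triangle[of c v u] by simp
qed

lemma cell_boxes_disjoint:
  fixes k k' :: "'b::euclidean_space \<Rightarrow> int"
  assumes "s > 0" "j \<in> Basis" "k j \<noteq> k' j" "even (k j) \<longleftrightarrow> even (k' j)"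
  shows "box (cell_lo s k) (cell_hi s k) \<inter> box (cell_lo s k') (cell_hi s k') = {}"
proof -
  have "even (k j - k' j)" using assms(4) by simp
  then obtain t where "k j - k' j = 2 * t" by (rule evenE)
  then have "k j + 2 \<le> k' j \<or> k' j + 2 \<le> k j" using assms(3) by presburger
  then have "(real_of_int (k j) + 5/4) * s \<le> (real_of_int (k' j) - 1/4) * s \<or>
      (real_of_int (k' j) + 5/4) * s \<le> (real_of_int (k j) - 1/4) * s"
    using assms(1) by (auto intro!: mult_right_mono)
  moreover have False if "v \<in> box (cell_lo s k) (cell_hi s k)" "v \<in> box (cell_lo s k') (cell_hi s k')" for v
  proof -
    have "(real_of_int (k j) - 1/4) * s < v \<bullet> j" "v \<bullet> j < (real_of_int (k j) + 5/4) * s"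
      "(real_of_int (k' j) - 1/4) * s < v \<bullet> j" "v \<bullet> j < (real_of_int (k' j) + 5/4) * s"
      using that assms(2) unfolding mem_cell_box by auto
    with calculation show False by linarith
  qed
  ultimately show ?thesis by blast
qed

lemma cell_box_images_eq_or_disjoint:
  fixes k k' :: "'b::euclidean_space \<Rightarrow> int"
  assumes "s > 0" "inj_on \<phi> V" "box (cell_lo s k) (cell_hi s k) \<subseteq> V" "box (cell_lo s k') (cell_hi s k') \<subseteq> V"
    and "{j\<in>Basis. odd (k j)} = {j\<in>Basis. odd (k' j)}"
  shows "\<phi> ` box (cell_lo s k) (cell_hi s k) = \<phi> ` box (cell_lo s k') (cell_hi s k') \<or>
    \<phi> ` box (cell_lo s k) (cell_hi s k) \<inter> \<phi> ` box (cell_lo s k') (cell_hi s k') = {}"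
proof (cases "\<forall>j\<in>Basis. k j = k' j")
  case True
  then show ?thesis using cell_box_cong[of k k' s] by auto
next
  case False
  then obtain j where "j \<in> Basis" "k j \<noteq> k' j" by blast
  moreover have "even (k j) \<longleftrightarrow> even (k' j)" using assms(5) \<open>j \<in> Basis\<close> by blast
  ultimately have "box (cell_lo s k) (cell_hi s k) \<inter> box (cell_lo s k') (cell_hi s k') = {}"
    by (rule cell_boxes_disjoint[OF assms(1)])
  then show ?thesis using inj_on_image_Int[OF assms(2-4)] by simp
qed

lemma disjoint_chart_cell_images:
  fixes k :: "'i \<Rightarrow> 'b::euclidean_space \<Rightarrow> int"
  assumes "s > 0"
    and "\<And>i. i \<in> I \<Longrightarrow> inj_on (\<phi> (ch i)) (V (ch i)) \<and> box (cell_lo s (k i)) (cell_hi s (k i)) \<subseteq> V (ch i)"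
  shows "disjoint ((\<lambda>i. \<phi> (ch i) ` box (cell_lo s (k i)) (cell_hi s (k i))) `
    {i\<in>I. (ch i, {j\<in>Basis. odd (k i j)}) = \<kappa>})"
proof (rule pairwise_imageI)
  fix i j assume ij: "i \<in> {i\<in>I. (ch i, {j\<in>Basis. odd (k i j)}) = \<kappa>}" "j \<in> {i\<in>I. (ch i, {j\<in>Basis. odd (k i j)}) = \<kappa>}"
    and ne: "\<phi> (ch i) ` box (cell_lo s (k i)) (cell_hi s (k i)) \<noteq> \<phi> (ch j) ` box (cell_lo s (k j)) (cell_hi s (k j))"
  then have chj: "ch j = ch i" and par: "{l\<in>Basis. odd (k i l)} = {l\<in>Basis. odd (k j l)}" by auto
  have inj: "inj_on (\<phi> (ch i)) (V (ch i))" and Bi: "box (cell_lo s (k i)) (cell_hi s (k i)) \<subseteq> V (ch i)"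
    using assms(2) ij(1) by auto
  have Bj: "box (cell_lo s (k j)) (cell_hi s (k j)) \<subseteq> V (ch i)" using assms(2)[of j] ij(2) chj by simp
  show "disjnt (\<phi> (ch i) ` box (cell_lo s (k i)) (cell_hi s (k i)))
      (\<phi> (ch j) ` box (cell_lo s (k j)) (cell_hi s (k j)))"
    using cell_box_images_eq_or_disjoint[OF assms(1) inj Bi Bj par] ne chj by (auto simp: disjnt_def)
qed

section \<open>Composing homeomorphisms with small supports\<close>

definition moves_within :: "'a set \<Rightarrow> 'a set set \<Rightarrow> ('a \<Rightarrow> 'a) \<Rightarrow> bool" where
  "moves_within X \<S> \<Phi> \<longleftrightarrow> (\<forall>z\<in>X. \<Phi> z = z \<or> (\<exists>S\<in>\<S>. z \<in> S \<and> \<Phi> z \<in> S))"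

lemma moves_within_id: "moves_within X \<S> id"
  by (simp add: moves_within_def)

lemma moves_within_mono: "moves_within X \<S> \<Phi> \<Longrightarrow> \<S> \<subseteq> \<T> \<Longrightarrow> moves_within X \<T> \<Phi>"
  unfolding moves_within_def by blast

lemma moves_within_compose:
  assumes "moves_within X \<S> \<Phi>" "moves_within X \<S> \<Psi>" "\<Phi> ` X \<subseteq> X" "disjoint \<S>"
  shows "moves_within X \<S> (\<Psi> \<circ> \<Phi>)"
  unfolding moves_within_def
proof
  fix z assume "z \<in> X"
  then consider "\<Phi> z = z" | S where "S \<in> \<S>" "z \<in> S" "\<Phi> z \<in> S"
    using assms(1) unfolding moves_within_def by blast
  then show "(\<Psi> \<circ> \<Phi>) z = z \<or> (\<exists>S\<in>\<S>. z \<in> S \<and> (\<Psi> \<circ> \<Phi>) z \<in> S)"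
  proof cases
    case 2
    text \<open>\<open>\<Psi>\<close> can only move \<open>\<Phi> z\<close> inside the unique member of \<open>\<S>\<close> containing it.\<close>
    then show ?thesis
      using assms(2-4) \<open>z \<in> X\<close> unfolding moves_within_def disjoint_def by (metis comp_apply disjoint_iff image_subset_iff)
  qed (use assms(2) \<open>z \<in> X\<close> in \<open>auto simp: moves_within_def\<close>)
qed

lemma moves_within_dist:
  assumes "moves_within X \<S> \<Phi>" "z \<in> X" "\<Phi> z \<in> X" "0 \<le> D"
    and "\<And>S u v. S \<in> \<S> \<Longrightarrow> u \<in> X \<inter> S \<Longrightarrow> v \<in> X \<inter> S \<Longrightarrow> dist u v \<le> D"
  shows "dist (\<Phi> z) z \<le> D"
  using assms unfolding moves_within_def by force

lemma homeomorphism_moving_points_disjoint: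
  assumes "finite J"
    and move: "\<And>i F. i \<in> J \<Longrightarrow> finite F \<Longrightarrow> a i \<notin> F \<Longrightarrow> b i \<notin> F \<Longrightarrow>
      \<exists>\<Phi> \<Phi>'. homeomorphism X X \<Phi> \<Phi>' \<and> \<Phi> (a i) = b i \<and> (\<forall>z\<in>F. \<Phi> z = z) \<and> moves_within X {S i} \<Phi>"
    and "inj_on a J" "inj_on b J" "\<forall>i\<in>J. \<forall>j\<in>J. i \<noteq> j \<longrightarrow> a i \<noteq> b j" "disjoint (S ` J)"
    and "finite F" "F \<inter> (a ` J \<union> b ` J) = {}"
  shows "\<exists>\<Phi> \<Phi>'. homeomorphism X X \<Phi> \<Phi>' \<and> (\<forall>i\<in>J. \<Phi> (a i) = b i) \<and> (\<forall>z\<in>F. \<Phi> z = z)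
    \<and> moves_within X (S ` J) \<Phi>"
  using assms
proof (induction J arbitrary: F rule: finite_induct)
  case empty
  have "homeomorphism X X id id" by (rule homeomorphism_ident[folded id_def])
  with moves_within_id show ?case by fastforce
next
  case (insert i J)
  note move = insert.prems(1) and inj = insert.prems(2,3) and ab = insert.prems(4)
  have disj: "disjoint (S ` J)" using insert.prems(5) by (rule pairwise_subset) auto
  have ai: "a i \<notin> a ` J" "a i \<notin> b ` J" "b i \<notin> b ` J"
    using inj ab insert.hyps(2) by (auto simp: inj_on_def)
  text \<open>First move the other points while keeping \<open>a i\<close> fixed, then move \<open>a i\<close> while keeping their images fixed.\<close>
  obtain \<Phi> \<Phi>' where \<Phi>: "homeomorphism X X \<Phi> \<Phi>'" "\<forall>j\<in>J. \<Phi> (a j) = b j" "\<forall>z\<in>insert (a i) F. \<Phi> z = z"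
      "moves_within X (S ` J) \<Phi>"
  proof -
    have "insert (a i) F \<inter> (a ` J \<union> b ` J) = {}" using ai insert.prems(7) by blast
    then have "\<exists>\<Phi> \<Phi>'. homeomorphism X X \<Phi> \<Phi>' \<and> (\<forall>j\<in>J. \<Phi> (a j) = b j) \<and> (\<forall>z\<in>insert (a i) F. \<Phi> z = z)
        \<and> moves_within X (S ` J) \<Phi>"
      using insert.IH[OF _ _ _ _ disj, of "insert (a i) F"] move inj ab insert.prems(6)
      by (simp add: inj_on_insert)
    then show ?thesis using that by blast
  qed
  obtain \<Psi> \<Psi>' where \<Psi>: "homeomorphism X X \<Psi> \<Psi>'" "\<Psi> (a i) = b i" "\<forall>z\<in>F \<union> b ` J. \<Psi> z = z"
      "moves_within X {S i} \<Psi>"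
  proof -
    have "a i \<notin> F \<union> b ` J" "b i \<notin> F \<union> b ` J" using ai insert.prems(7) by auto
    then show ?thesis using move[of i "F \<union> b ` J"] insert.prems(6) insert.hyps(1) that by blast
  qed
  have "\<Phi> ` X \<subseteq> X" using \<Phi>(1) by (simp add: homeomorphism_def)
  then have "moves_within X (S ` insert i J) (\<Psi> \<circ> \<Phi>)"
    using \<Phi>(4) \<Psi>(4) insert.prems(5)
    by (intro moves_within_compose) (auto elim: moves_within_mono)
  moreover have "\<forall>j\<in>insert i J. (\<Psi> \<circ> \<Phi>) (a j) = b j" "\<forall>z\<in>F. (\<Psi> \<circ> \<Phi>) z = z"
    using \<Phi>(2,3) \<Psi>(2,3) by auto
  ultimately show ?case using homeomorphism_compose[OF \<Phi>(1) \<Psi>(1)] by blast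
qed

lemma homeomorphism_moving_points_grouped:
  fixes D :: real
  assumes "finite I"
    and move: "\<And>i F. i \<in> I \<Longrightarrow> finite F \<Longrightarrow> a i \<notin> F \<Longrightarrow> b i \<notin> F \<Longrightarrow>
      \<exists>\<Phi> \<Phi>'. homeomorphism X X \<Phi> \<Phi>' \<and> \<Phi> (a i) = b i \<and> (\<forall>z\<in>F. \<Phi> z = z) \<and> moves_within X {S i} \<Phi>"
    and inj: "inj_on a I" "inj_on b I" and ab: "\<forall>i\<in>I. \<forall>j\<in>I. i \<noteq> j \<longrightarrow> a i \<noteq> b j"
    and disj: "\<And>\<kappa>. disjoint (S ` {i\<in>I. key i = \<kappa>})"
    and diam: "\<And>i u v. i \<in> I \<Longrightarrow> u \<in> X \<inter> S i \<Longrightarrow> v \<in> X \<inter> S i \<Longrightarrow> dist u v \<le> D" and "0 \<le> D"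
  shows "\<exists>\<Phi> \<Phi>'. homeomorphism X X \<Phi> \<Phi>' \<and> (\<forall>i\<in>I. \<Phi> (a i) = b i) \<and> (\<forall>z\<in>X. dist (\<Phi> z) z \<le> card (key ` I) * D)"
proof -
  text \<open>Moving the groups one after the other, each point of \<open>X\<close> travels at most \<open>D\<close> per group.\<close>
  have "\<exists>\<Phi> \<Phi>'. homeomorphism X X \<Phi> \<Phi>' \<and> (\<forall>i\<in>I. \<Phi> (a i) = (if key i \<in> K then b i else a i))
      \<and> (\<forall>z\<in>X. dist (\<Phi> z) z \<le> card K * D)" if "K \<subseteq> key ` I" for K
    using finite_subset[OF that finite_imageI[OF \<open>finite I\<close>]] that
  proof (induction K rule: finite_subset_induct)
    case empty
    have "homeomorphism X X id id" by (rule homeomorphism_ident[folded id_def])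
    then show ?case by fastforce
  next
    case (insert \<kappa> K)
    then obtain \<Phi> \<Phi>' where \<Phi>: "homeomorphism X X \<Phi> \<Phi>'" "\<forall>i\<in>I. \<Phi> (a i) = (if key i \<in> K then b i else a i)"
        "\<forall>z\<in>X. dist (\<Phi> z) z \<le> card K * D"
      by blast
    define J where "J = {i\<in>I. key i = \<kappa>}"
    define F where "F = b ` {i\<in>I. key i \<in> K} \<union> a ` {i\<in>I. key i \<notin> insert \<kappa> K}"
    have "J \<subseteq> I" "finite J" "finite F" using \<open>finite I\<close> by (auto simp: J_def F_def)
    moreover have "F \<inter> (a ` J \<union> b ` J) = {}"
    proof -
      have "b i \<noteq> a j" "b i \<noteq> b j" if "i \<in> I" "key i \<in> K" "j \<in> I" "key j = \<kappa>" for i j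
        using that ab inj_onD[OF inj(2)] insert.hyps(3) by metis+
      moreover have "a i \<noteq> a j" "a i \<noteq> b j" if "i \<in> I" "key i \<notin> insert \<kappa> K" "j \<in> I" "key j = \<kappa>" for i j
        using that ab inj_onD[OF inj(1)] by (metis insertI1)+
      ultimately show ?thesis unfolding F_def J_def by blast
    qed
    ultimately obtain \<Psi> \<Psi>' where \<Psi>: "homeomorphism X X \<Psi> \<Psi>'" "\<forall>i\<in>J. \<Psi> (a i) = b i" "\<forall>z\<in>F. \<Psi> z = z"
        "moves_within X (S ` J) \<Psi>"
      using homeomorphism_moving_points_disjoint[of J a b X S F] move inj ab disj[of \<kappa>]
      unfolding J_def by (auto intro: inj_on_subset)
    have "dist (\<Psi> (\<Phi> z)) z \<le> card (insert \<kappa> K) * D" if "z \<in> X" for z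
    proof -
      have \<Phi>z: "\<Phi> z \<in> X" using \<Phi>(1) that by (auto simp: homeomorphism_def)
      then have \<Psi>\<Phi>z: "\<Psi> (\<Phi> z) \<in> X" using \<Psi>(1) by (auto simp: homeomorphism_def)
      have "dist (\<Psi> (\<Phi> z)) (\<Phi> z) \<le> D"
        by (rule moves_within_dist[OF \<Psi>(4) \<Phi>z \<Psi>\<Phi>z \<open>0 \<le> D\<close>]) (use diam in \<open>auto simp: J_def\<close>)
      have "dist (\<Psi> (\<Phi> z)) z \<le> dist (\<Psi> (\<Phi> z)) (\<Phi> z) + dist (\<Phi> z) z" by (rule dist_triangle)
      also have "\<dots> \<le> D + card K * D" using \<open>dist (\<Psi> (\<Phi> z)) (\<Phi> z) \<le> D\<close> \<Phi>(3) that by (intro add_mono) auto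
      also have "\<dots> = card (insert \<kappa> K) * D" using insert.hyps(1,3) by (simp add: algebra_simps)
      finally show ?thesis .
    qed
    moreover have "\<forall>i\<in>I. \<Psi> (\<Phi> (a i)) = (if key i \<in> insert \<kappa> K then b i else a i)"
      using \<Phi>(2) \<Psi>(2,3) unfolding F_def J_def by auto
    moreover have "homeomorphism X X (\<Psi> \<circ> \<Phi>) (\<Phi>' \<circ> \<Psi>')" by (rule homeomorphism_compose[OF \<Phi>(1) \<Psi>(1)])
    ultimately show ?case unfolding comp_def by blast
  qed
  then show ?thesis by fastforce
qed

section \<open>Moving a point inside a chart\<close>

lemma continuous_on_chart_modification:
  fixes \<phi> :: "'b::euclidean_space \<Rightarrow> 'a::metric_space"
  assumes hom: "homeomorphism V U \<phi> \<psi>" and UX: "openin (top_of_set X) U"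
    and "bounded B" "closure B \<subseteq> V"
    and "continuous_on UNIV \<mu>" "\<And>v. v \<notin> B \<Longrightarrow> \<mu> v = v" "\<And>v. v \<in> V \<Longrightarrow> \<mu> v \<in> V"
  shows "continuous_on X (\<lambda>z. if z \<in> U then \<phi> (\<mu> (\<psi> z)) else z)"
proof -
  have U: "U \<subseteq> X" using UX by (rule openin_imp_subset)
  define C where "C = \<phi> ` closure B"
  have "compact C" unfolding C_def
    using assms(3,4) homeomorphism_cont1[OF hom]
    by (intro compact_continuous_image) (auto simp: compact_closure intro: continuous_on_subset)
  then have "openin (top_of_set X) (X \<inter> - C)"
    by (intro openin_open_Int) (simp add: compact_imp_closed open_Compl)
  then have "openin (top_of_set X) (X - C)" by (simp add: Diff_eq)
  moreover have "C \<subseteq> U" unfolding C_def using assms(4) hom by (auto simp: homeomorphism_def)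
  then have XUC: "X = U \<union> (X - C)" using U by blast
  moreover have "continuous_on U (\<lambda>z. \<mu> (\<psi> z))"
    using continuous_on_compose2[OF assms(5) homeomorphism_cont2[OF hom]] by simp
  then have "continuous_on U (\<lambda>z. \<phi> (\<mu> (\<psi> z)))"
    by (rule continuous_on_compose2[OF homeomorphism_cont1[OF hom]])
      (use hom assms(7) in \<open>auto simp: homeomorphism_def\<close>)
  then have "continuous_on U (\<lambda>z. if z \<in> U then \<phi> (\<mu> (\<psi> z)) else z)" by (rule continuous_on_eq) simp
  moreover have outside: "(if z \<in> U then \<phi> (\<mu> (\<psi> z)) else z) = z" if "z \<in> X - C" for z
  proof (cases "z \<in> U")
    case True
    then have "\<psi> z \<notin> B" using that closure_subset hom unfolding C_def homeomorphism_def by force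
    then show ?thesis using True assms(6) hom by (simp add: homeomorphism_apply2)
  qed simp
  have "continuous_on (X - C) (\<lambda>z. if z \<in> U then \<phi> (\<mu> (\<psi> z)) else z)"
    by (rule continuous_on_eq[OF continuous_on_id]) (simp add: outside)
  ultimately show ?thesis
    by (metis UX continuous_on_Un_local_open)
qed

lemma homeomorphism_chart_extension:
  fixes \<phi> :: "'b::euclidean_space \<Rightarrow> 'a::metric_space"
  assumes hom: "homeomorphism V U \<phi> \<psi>" and UX: "openin (top_of_set X) U"
    and B: "bounded B" "closure B \<subseteq> V"
    and \<mu>: "homeomorphism UNIV UNIV \<mu> \<mu>'" "\<And>v. v \<notin> B \<Longrightarrow> \<mu> v = v \<and> \<mu>' v = v"
  shows "\<exists>\<Phi> \<Phi>'. homeomorphism X X \<Phi> \<Phi>' \<and> (\<forall>z. z \<notin> \<phi> ` B \<longrightarrow> \<Phi> z = z) \<and> (\<forall>v\<in>V. \<Phi> (\<phi> v) = \<phi> (\<mu> v))"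
proof -
  have \<mu>\<mu>: "\<mu>' (\<mu> v) = v" "\<mu> (\<mu>' v) = v" for v using \<mu>(1) by (auto simp: homeomorphism_def)
  text \<open>Off \<open>B\<close> both maps are the identity, so they cannot map a point of \<open>B\<close> outside \<open>B\<close>.\<close>
  have \<mu>V: "\<mu> v \<in> V" "\<mu>' v \<in> V" if "v \<in> V" for v
    using that \<mu>(2) \<mu>\<mu> B(2) closure_subset by (metis subsetD)+
  have \<phi>\<psi>: "\<psi> ` U \<subseteq> V" "\<phi> ` V \<subseteq> U" "\<And>z. z \<in> U \<Longrightarrow> \<phi> (\<psi> z) = z" "\<And>v. v \<in> V \<Longrightarrow> \<psi> (\<phi> v) = v"
    using hom by (auto simp: homeomorphism_def)
  define \<Phi> where "\<Phi> \<nu> z = (if z \<in> U then \<phi> (\<nu> (\<psi> z)) else z)" for \<nu> z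
  have "U \<subseteq> X" using UX by (rule openin_imp_subset)
  then have "\<Phi> \<nu> ` X \<subseteq> X" if "\<And>v. v \<in> V \<Longrightarrow> \<nu> v \<in> V" for \<nu>
    using that \<phi>\<psi> unfolding \<Phi>_def by (auto simp: image_subset_iff)
  moreover have "\<Phi> \<nu> (\<Phi> \<nu>' z) = z" if "\<And>v. v \<in> V \<Longrightarrow> \<nu>' v \<in> V" "\<And>v. \<nu> (\<nu>' v) = v" for \<nu> \<nu>' z
    using that \<phi>\<psi> unfolding \<Phi>_def by (auto simp: image_subset_iff)
  moreover have "continuous_on X (\<Phi> \<nu>)" if "\<nu> = \<mu> \<or> \<nu> = \<mu>'" for \<nu>
    unfolding \<Phi>_def using that \<mu> \<mu>V homeomorphism_cont1[OF \<mu>(1)] homeomorphism_cont2[OF \<mu>(1)]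
    by (intro continuous_on_chart_modification[OF hom UX B]) auto
  ultimately have "homeomorphism X X (\<Phi> \<mu>) (\<Phi> \<mu>')"
    using \<mu>V \<mu>\<mu> by (intro homeomorphismI) auto
  moreover have "\<Phi> \<mu> z = z" if "z \<notin> \<phi> ` B" for z
    using that \<mu>(2) \<phi>\<psi> unfolding \<Phi>_def by (metis image_eqI)
  moreover have "\<Phi> \<mu> (\<phi> v) = \<phi> (\<mu> v)" if "v \<in> V" for v
    using that \<phi>\<psi> unfolding \<Phi>_def by auto
  ultimately show ?thesis by blast
qed

lemma homeomorphism_moving_point_fixing:
  fixes B :: "'b::euclidean_space set"
  assumes "DIM('b) \<ge> 2" "open B" "connected B" "u \<in> B" "w \<in> B" "finite F" "u \<notin> F" "w \<notin> F"
  obtains \<mu> \<mu>' where "homeomorphism UNIV UNIV \<mu> \<mu>'" "\<mu> u = w" "\<And>v. v \<in> F \<Longrightarrow> \<mu> v = v"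
    "\<And>v. v \<notin> B \<Longrightarrow> \<mu> v = v \<and> \<mu>' v = v"
proof -
  define K where "K = insert None (Some ` (F \<inter> B))"
  define x where "x k = (case k of None \<Rightarrow> u | Some v \<Rightarrow> v)" for k
  define y where "y k = (case k of None \<Rightarrow> w | Some v \<Rightarrow> v)" for k
  have K: "finite K" using assms(6) by (simp add: K_def)
  have xy: "x k \<in> B \<and> y k \<in> B" if "k \<in> K" for k
    using that assms(4,5) by (auto simp: K_def x_def y_def)
  have pw: "pairwise (\<lambda>i j. x i \<noteq> x j \<and> y i \<noteq> y j) K"
    using assms(7,8) unfolding pairwise_def K_def x_def y_def by auto
  have hull: "UNIV \<subseteq> affine hull B" using affine_hull_open[OF assms(2)] assms(4) by auto
  obtain \<mu> \<mu>' where \<mu>: "homeomorphism UNIV UNIV \<mu> \<mu>'" "\<And>k. k \<in> K \<Longrightarrow> \<mu> (x k) = y k"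
      "{v. \<not> (\<mu> v = v \<and> \<mu>' v = v)} \<subseteq> B"
    by (rule homeomorphism_moving_points_exists[OF assms(1-3) subset_UNIV K xy pw subset_UNIV hull assms(3)])
      (auto intro: that)
  have outside: "\<mu> v = v \<and> \<mu>' v = v" if "v \<notin> B" for v using \<mu>(3) that by blast
  have "\<mu> v = v" if "v \<in> F" for v
  proof (cases "v \<in> B")
    case True
    then show ?thesis using \<mu>(2)[of "Some v"] that by (simp add: K_def x_def y_def)
  qed (use outside in blast)
  moreover have "\<mu> u = w" using \<mu>(2)[of None] by (simp add: K_def x_def y_def)
  ultimately show ?thesis using that \<mu>(1) outside by blast
qed

lemma homeomorphism_moving_point_in_chart:
  fixes \<phi> :: "'b::euclidean_space \<Rightarrow> 'a::metric_space"
  assumes hom: "homeomorphism V U \<phi> \<psi>" and UX: "openin (top_of_set X) U"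
    and B: "open B" "connected B" "bounded B" "closure B \<subseteq> V" and "DIM('b) \<ge> 2"
    and "u \<in> B" "w \<in> B" "finite F" "\<phi> u \<notin> F" "\<phi> w \<notin> F"
  shows "\<exists>\<Phi> \<Phi>'. homeomorphism X X \<Phi> \<Phi>' \<and> \<Phi> (\<phi> u) = \<phi> w \<and> (\<forall>z\<in>F. \<Phi> z = z) \<and> moves_within X {\<phi> ` B} \<Phi>"
proof -
  have BV: "B \<subseteq> V" using B(4) closure_subset by blast
  have \<psi>\<phi>: "\<And>v. v \<in> V \<Longrightarrow> \<psi> (\<phi> v) = v" using hom by (simp add: homeomorphism_apply1)
  have "v \<notin> \<psi> ` (F \<inter> \<phi> ` B)" if "v \<in> B" "\<phi> v \<notin> F" for v
  proof
    assume "v \<in> \<psi> ` (F \<inter> \<phi> ` B)"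
    then obtain v' where "v' \<in> B" "\<phi> v' \<in> F" "v = \<psi> (\<phi> v')" by blast
    then show False using that BV \<psi>\<phi> by auto
  qed
  then have uw: "u \<notin> \<psi> ` (F \<inter> \<phi> ` B)" "w \<notin> \<psi> ` (F \<inter> \<phi> ` B)" using assms(8-12) by auto
  have fin: "finite (\<psi> ` (F \<inter> \<phi> ` B))" using assms(10) by simp
  obtain \<mu> \<mu>' where \<mu>: "homeomorphism UNIV UNIV \<mu> \<mu>'" "\<mu> u = w"
      "\<And>v. v \<in> \<psi> ` (F \<inter> \<phi> ` B) \<Longrightarrow> \<mu> v = v" "\<And>v. v \<notin> B \<Longrightarrow> \<mu> v = v \<and> \<mu>' v = v"
    by (rule homeomorphism_moving_point_fixing[OF assms(7) B(1,2) assms(8,9) fin uw]) (auto intro: that)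
  then obtain \<Phi> \<Phi>' where \<Phi>: "homeomorphism X X \<Phi> \<Phi>'" "\<And>z. z \<notin> \<phi> ` B \<Longrightarrow> \<Phi> z = z"
      "\<And>v. v \<in> V \<Longrightarrow> \<Phi> (\<phi> v) = \<phi> (\<mu> v)"
    using homeomorphism_chart_extension[OF hom UX B(3,4) \<mu>(1)] by blast
  have \<mu>B: "\<mu> v \<in> B" if "v \<in> B" for v
  proof (rule ccontr)
    assume "\<mu> v \<notin> B"
    then have "\<mu>' (\<mu> v) = \<mu> v" using \<mu>(4) by blast
    moreover have "\<mu>' (\<mu> v) = v" using \<mu>(1) by (simp add: homeomorphism_apply1)
    ultimately show False using that \<open>\<mu> v \<notin> B\<close> by simp
  qed
  have fixF: "\<Phi> z = z" if "z \<in> F" for z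
  proof (cases "z \<in> \<phi> ` B")
    case True
    then obtain v where v: "v \<in> B" "z = \<phi> v" by blast
    then have "v \<in> \<psi> ` (F \<inter> \<phi> ` B)" using that True BV \<psi>\<phi> by (auto intro!: image_eqI[where x = z])
    then show ?thesis using v \<Phi>(3) \<mu>(3) BV by auto
  qed (use \<Phi>(2) in blast)
  have "\<Phi> z \<in> \<phi> ` B" if "z \<in> \<phi> ` B" for z using that \<Phi>(3) \<mu>B BV by auto
  then have "moves_within X {\<phi> ` B} \<Phi>"
    unfolding moves_within_def using \<Phi>(2) by (metis singletonI)
  moreover have "\<Phi> (\<phi> u) = \<phi> w" using \<Phi>(3)[of u] \<mu>(2) assms(8) BV by auto
  ultimately show ?thesis using \<Phi>(1) fixF by (intro exI[of _ \<Phi>] exI[of _ \<Phi>']) auto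
qed

section \<open>Moving finitely many points of a compact manifold\<close>

lemma finite_common_pos_threshold:
  fixes P :: "'i \<Rightarrow> real \<Rightarrow> bool"
  assumes "finite A" "\<And>i. i \<in> A \<Longrightarrow> \<exists>e>0. P i e"
    and mono: "\<And>i e e'. P i e \<Longrightarrow> 0 < e' \<Longrightarrow> e' \<le> e \<Longrightarrow> P i e'"
  shows "\<exists>e>0. \<forall>i\<in>A. P i e"
  using assms(1,2)
proof (induction A rule: finite_induct)
  case (insert i A)
  then obtain e e' where "e > 0" "\<forall>j\<in>A. P j e" "e' > 0" "P i e'" by blast
  then show ?case using mono by (intro exI[of _ "min e e'"]) (auto simp: min_le_iff_disj)
qed (use zero_less_one in blast)

lemma uniformly_continuous_on_finite_family:
  assumes "finite P" "\<And>p. p \<in> P \<Longrightarrow> uniformly_continuous_on (A p) (f p)" "e > 0"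
  obtains d where "d > 0"
    "\<And>p x x'. p \<in> P \<Longrightarrow> x \<in> A p \<Longrightarrow> x' \<in> A p \<Longrightarrow> dist x' x < d \<Longrightarrow> dist (f p x') (f p x) < e"
proof -
  have "\<exists>d>0. \<forall>p\<in>P. \<forall>x\<in>A p. \<forall>x'\<in>A p. dist x' x < d \<longrightarrow> dist (f p x') (f p x) < e"
  proof (rule finite_common_pos_threshold[OF assms(1)])
    show "\<exists>d>0. \<forall>x\<in>A p. \<forall>x'\<in>A p. dist x' x < d \<longrightarrow> dist (f p x') (f p x) < e" if "p \<in> P" for p
      using assms(2)[OF that] assms(3) unfolding uniformly_continuous_on_def by blast
  next
    fix p d d' assume "\<forall>x\<in>A p. \<forall>x'\<in>A p. dist x' x < d \<longrightarrow> dist (f p x') (f p x) < e" "0 < d'" "d' \<le> d"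
    then show "\<forall>x\<in>A p. \<forall>x'\<in>A p. dist x' x < d' \<longrightarrow> dist (f p x') (f p x) < e" by auto
  qed
  then show ?thesis using that by blast
qed

lemma manifold_chart_ball:
  fixes X :: "'a::metric_space set"
  assumes "is_manifold_dim X TYPE('b)" "p \<in> X"
  obtains \<phi> :: "'b::euclidean_space \<Rightarrow> 'a" and \<psi> V U c r where "homeomorphism V U \<phi> \<psi>" "openin (top_of_set X) U" "r > 0"
    "cball c (2 * r) \<subseteq> V" "p \<in> \<phi> ` ball c r" "openin (top_of_set X) (\<phi> ` ball c r)"
proof -
  obtain U and V :: "'b set" where UV: "openin (top_of_set X) U" "p \<in> U" "open V" "V homeomorphic U"
    using assms unfolding is_manifold_dim_def by blast
  then obtain \<phi> \<psi> where hom: "homeomorphism V U \<phi> \<psi>" unfolding homeomorphic_def by blast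
  have c: "\<psi> p \<in> V" "\<phi> (\<psi> p) = p" using hom UV(2) unfolding homeomorphism_def by auto
  then obtain e where e: "e > 0" "ball (\<psi> p) e \<subseteq> V" using UV(3) open_contains_ball by blast
  define r where "r = e / 3"
  have r: "r > 0" "cball (\<psi> p) (2 * r) \<subseteq> V" using e unfolding r_def by (auto simp: subset_iff)
  have "ball (\<psi> p) r = V \<inter> ball (\<psi> p) r" using e unfolding r_def by auto
  then have "openin (top_of_set V) (ball (\<psi> p) r)" by (metis openin_open_Int open_ball)
  then have "openin (top_of_set U) (\<phi> ` ball (\<psi> p) r)" by (rule homeomorphism_imp_open_map[OF hom])
  then have "openin (top_of_set X) (\<phi> ` ball (\<psi> p) r)" using UV(1) by (rule openin_trans)
  moreover have "p \<in> \<phi> ` ball (\<psi> p) r" using c(2) r(1) by (metis centre_in_ball image_eqI)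
  ultimately show ?thesis using that hom UV(1) r by blast
qed

lemma compact_manifold_finite_atlas:
  fixes X :: "'a::metric_space set"
  assumes "compact X" "is_manifold_dim X TYPE('b)"
  obtains P \<epsilon> V U and \<phi> :: "'a \<Rightarrow> 'b::euclidean_space \<Rightarrow> 'a" and \<psi> r c where "finite P" "\<epsilon> > 0"
    "\<And>p. p \<in> P \<Longrightarrow> homeomorphism (V p) (U p) (\<phi> p) (\<psi> p) \<and> openin (top_of_set X) (U p) \<and> r p > 0
      \<and> cball (c p) (2 * r p) \<subseteq> V p"
    "\<And>x. x \<in> X \<Longrightarrow> \<exists>p\<in>P. X \<inter> ball x \<epsilon> \<subseteq> \<phi> p ` ball (c p) (r p)"
proof -
  have "\<exists>(\<phi> :: 'b \<Rightarrow> 'a) \<psi> V U c r. homeomorphism V U \<phi> \<psi> \<and> openin (top_of_set X) U \<and> r > 0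
      \<and> cball c (2 * r) \<subseteq> V \<and> p \<in> \<phi> ` ball c r \<and> openin (top_of_set X) (\<phi> ` ball c r)" if "p \<in> X" for p
    by (rule manifold_chart_ball[OF assms(2) that]) blast
  then obtain \<phi> :: "'a \<Rightarrow> 'b \<Rightarrow> 'a" and \<psi> V U c r where ch: "\<And>p. p \<in> X \<Longrightarrow>
      homeomorphism (V p) (U p) (\<phi> p) (\<psi> p) \<and> openin (top_of_set X) (U p) \<and> r p > 0
      \<and> cball (c p) (2 * r p) \<subseteq> V p \<and> p \<in> \<phi> p ` ball (c p) (r p) \<and> openin (top_of_set X) (\<phi> p ` ball (c p) (r p))"
    by metis
  then obtain G where G: "\<And>p. p \<in> X \<Longrightarrow> open (G p) \<and> \<phi> p ` ball (c p) (r p) = X \<inter> G p"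
    unfolding openin_open by metis
  have Gopen: "\<And>p. p \<in> X \<Longrightarrow> open (G p)" using G by blast
  have cover: "X \<subseteq> \<Union> (G ` X)" using ch G by blast
  obtain P where P: "P \<subseteq> X" "finite P" "X \<subseteq> \<Union> (G ` P)"
    by (rule compactE_image[OF assms(1) Gopen cover])
  have GPopen: "\<And>H. H \<in> G ` P \<Longrightarrow> open H" using Gopen P(1) by blast
  have "\<exists>\<epsilon>>0. \<forall>x\<in>X. \<exists>H\<in>G ` P. ball x \<epsilon> \<subseteq> H"
    by (rule Heine_Borel_lemma[OF assms(1) P(3) GPopen]) auto
  then obtain \<epsilon> where \<epsilon>: "\<epsilon> > 0" "\<And>x. x \<in> X \<Longrightarrow> \<exists>H\<in>G ` P. ball x \<epsilon> \<subseteq> H" by blast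
  have "\<exists>p\<in>P. X \<inter> ball x \<epsilon> \<subseteq> \<phi> p ` ball (c p) (r p)" if x: "x \<in> X" for x
  proof -
    obtain p where "p \<in> P" "ball x \<epsilon> \<subseteq> G p" using \<epsilon>(2)[OF x] by blast
    moreover from this have "\<phi> p ` ball (c p) (r p) = X \<inter> G p" using G P(1) by blast
    ultimately show ?thesis by blast
  qed
  moreover have "homeomorphism (V p) (U p) (\<phi> p) (\<psi> p) \<and> openin (top_of_set X) (U p) \<and> r p > 0
      \<and> cball (c p) (2 * r p) \<subseteq> V p" if "p \<in> P" for p
    using ch that P(1) by blast
  ultimately show ?thesis using that[OF P(2) \<open>\<epsilon> > 0\<close>] by blast
qed

lemma chart_cell_mesh:
  fixes \<phi> :: "'k \<Rightarrow> 'b::euclidean_space \<Rightarrow> 'a::metric_space"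
  assumes "finite P" "D > 0" "\<And>p. p \<in> P \<Longrightarrow> r p > 0 \<and> continuous_on (cball (c p) (2 * r p)) (\<phi> p)"
  obtains s where "s > 0" "\<And>p. p \<in> P \<Longrightarrow> 3 / 2 * s * DIM('b) \<le> r p"
    "\<And>p v v'. p \<in> P \<Longrightarrow> v \<in> cball (c p) (2 * r p) \<Longrightarrow> v' \<in> cball (c p) (2 * r p) \<Longrightarrow>
      dist v v' \<le> 3 / 2 * s * DIM('b) \<Longrightarrow> dist (\<phi> p v) (\<phi> p v') \<le> D"
proof -
  have "uniformly_continuous_on (cball (c p) (2 * r p)) (\<phi> p)" if "p \<in> P" for p
    using assms(3)[OF that] by (intro compact_uniformly_continuous) auto
  then obtain \<sigma> where "\<sigma> > 0" and \<sigma>: "\<And>p v v'. p \<in> P \<Longrightarrow> v \<in> cball (c p) (2 * r p) \<Longrightarrow>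
      v' \<in> cball (c p) (2 * r p) \<Longrightarrow> dist v' v < \<sigma> \<Longrightarrow> dist (\<phi> p v') (\<phi> p v) < D"
    by (rule uniformly_continuous_on_finite_family[OF assms(1) _ assms(2)]) blast+
  obtain \<rho> where "\<rho> > 0" and \<rho>: "\<And>p. p \<in> P \<Longrightarrow> \<rho> \<le> r p"
    using finite_common_pos_threshold[OF assms(1), of "\<lambda>p e. e \<le> r p"] assms(3) by force
  define s where "s = min \<sigma> \<rho> / (2 * DIM('b))"
  have s_eq: "3 / 2 * s * DIM('b) = 3 / 4 * min \<sigma> \<rho>" by (simp add: s_def)
  show ?thesis
  proof (rule that)
    show "s > 0" using \<open>\<sigma> > 0\<close> \<open>\<rho> > 0\<close> by (simp add: s_def)
    show "3 / 2 * s * DIM('b) \<le> r p" if "p \<in> P" for p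
      using \<rho>[OF that] \<open>\<sigma> > 0\<close> \<open>\<rho> > 0\<close> unfolding s_eq by linarith
    show "dist (\<phi> p v) (\<phi> p v') \<le> D" if "p \<in> P" "v \<in> cball (c p) (2 * r p)" "v' \<in> cball (c p) (2 * r p)"
      "dist v v' \<le> 3 / 2 * s * DIM('b)" for p v v'
    proof -
      have "dist v' v < \<sigma>"
        using that(4) min.cobounded1[of \<sigma> \<rho>] \<open>\<sigma> > 0\<close> \<open>\<rho> > 0\<close> unfolding s_eq by (simp add: dist_commute)
      then show ?thesis using \<sigma>[OF that(1,3,2)] by (simp add: dist_commute)
    qed
  qed
qed

lemma chart_inverse_uniform:
  fixes \<phi> :: "'k \<Rightarrow> 'b::euclidean_space \<Rightarrow> 'a::metric_space"
  assumes "finite P" "\<And>p. p \<in> P \<Longrightarrow> homeomorphism (V p) (U p) (\<phi> p) (\<psi> p) \<and> cball (c p) (r p) \<subseteq> V p"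
    and "e > 0"
  obtains \<eta> where "\<eta> > 0" "\<And>p z z'. p \<in> P \<Longrightarrow> z \<in> \<phi> p ` cball (c p) (r p) \<Longrightarrow>
    z' \<in> \<phi> p ` cball (c p) (r p) \<Longrightarrow> dist z' z < \<eta> \<Longrightarrow> dist (\<psi> p z') (\<psi> p z) < e"
proof -
  have "uniformly_continuous_on (\<phi> p ` cball (c p) (r p)) (\<psi> p)" if "p \<in> P" for p
  proof -
    have hom: "homeomorphism (V p) (U p) (\<phi> p) (\<psi> p)" and sub: "cball (c p) (r p) \<subseteq> V p"
      using assms(2)[OF that] by auto
    then have "compact (\<phi> p ` cball (c p) (r p))"
      by (intro compact_continuous_image continuous_on_subset[OF homeomorphism_cont1[OF hom]]) auto
    moreover have "\<phi> p ` cball (c p) (r p) \<subseteq> U p" using hom sub by (auto simp: homeomorphism_def)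
    ultimately show ?thesis
      by (intro compact_uniformly_continuous continuous_on_subset[OF homeomorphism_cont2[OF hom]])
  qed
  then obtain \<eta> where "\<eta> > 0" "\<And>p z z'. p \<in> P \<Longrightarrow> z \<in> \<phi> p ` cball (c p) (r p) \<Longrightarrow>
      z' \<in> \<phi> p ` cball (c p) (r p) \<Longrightarrow> dist z' z < \<eta> \<Longrightarrow> dist (\<psi> p z') (\<psi> p z) < e"
    by (rule uniformly_continuous_on_finite_family[OF assms(1) _ assms(3)]) blast+
  then show ?thesis by (rule that)
qed

lemma homeomorphism_moving_points_atlas:
  fixes \<phi> :: "'k \<Rightarrow> 'b::euclidean_space \<Rightarrow> 'a::metric_space" and D s :: real
  assumes "DIM('b) \<ge> 2" "finite P" "s > 0" "0 \<le> D"
    and chart: "\<And>p. p \<in> P \<Longrightarrow> homeomorphism (V p) (U p) (\<phi> p) (\<psi> p) \<and> openin (top_of_set X) (U p)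
      \<and> cball (c p) (2 * r p) \<subseteq> V p \<and> 3 / 2 * s * DIM('b) \<le> r p"
    and unif: "\<And>p v v'. p \<in> P \<Longrightarrow> v \<in> cball (c p) (2 * r p) \<Longrightarrow> v' \<in> cball (c p) (2 * r p) \<Longrightarrow>
      dist v v' \<le> 3 / 2 * s * DIM('b) \<Longrightarrow> dist (\<phi> p v) (\<phi> p v') \<le> D"
    and I: "finite I" "inj_on a I" "inj_on b I" "\<forall>i\<in>I. \<forall>j\<in>I. i \<noteq> j \<longrightarrow> a i \<noteq> b j"
    and pair: "\<And>i. i \<in> I \<Longrightarrow> ch i \<in> P \<and> u i \<in> ball (c (ch i)) (r (ch i)) \<and> dist (u i) (w i) < s / 4
      \<and> a i = \<phi> (ch i) (u i) \<and> b i = \<phi> (ch i) (w i)"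
  shows "\<exists>\<Phi> \<Phi>'. homeomorphism X X \<Phi> \<Phi>' \<and> (\<forall>i\<in>I. \<Phi> (a i) = b i)
    \<and> (\<forall>z\<in>X. dist (\<Phi> z) z \<le> card P * 2 ^ DIM('b) * D)"
proof -
  define Bx where "Bx i = box (cell_lo s (cell_index s (u i))) (cell_hi s (cell_index s (u i)))" for i
  text \<open>Cells with the same chart and the same parity pattern are equal or disjoint, so the pairs of one
    group can be moved together; there are at most \<open>card P * 2 ^ DIM('b)\<close> groups.\<close>
  define key where "key i = (ch i, {j\<in>Basis. odd (cell_index s (u i) j)})" for i
  have uw: "u i \<in> Bx i" "w i \<in> Bx i" if "i \<in> I" for i
    using cell_box_index[OF \<open>s > 0\<close>] pair[OF that] unfolding Bx_def by auto
  have BV: "closure (Bx i) \<subseteq> cball (c (ch i)) (2 * r (ch i))" "cball (c (ch i)) (2 * r (ch i)) \<subseteq> V (ch i)"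
    if "i \<in> I" for i
    using closure_cell_box_subset_cball uw[OF that] pair[OF that] chart unfolding Bx_def by blast+
  have BxV: "Bx i \<subseteq> V (ch i)" if "i \<in> I" for i using BV[OF that] closure_subset by blast
  have stage: "\<exists>\<Phi> \<Phi>'. homeomorphism X X \<Phi> \<Phi>' \<and> \<Phi> (a i) = b i \<and> (\<forall>z\<in>F. \<Phi> z = z)
      \<and> moves_within X {\<phi> (ch i) ` Bx i} \<Phi>"
    if "i \<in> I" "finite F" "a i \<notin> F" "b i \<notin> F" for i F
  proof -
    have hom: "homeomorphism (V (ch i)) (U (ch i)) (\<phi> (ch i)) (\<psi> (ch i))" "openin (top_of_set X) (U (ch i))"
      using chart pair that(1) by blast+
    have B: "open (Bx i)" "connected (Bx i)" "bounded (Bx i)" "closure (Bx i) \<subseteq> V (ch i)"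
      using BV[OF that(1)] by (auto simp: Bx_def convex_connected)
    show ?thesis
      using homeomorphism_moving_point_in_chart[OF hom B assms(1) uw[OF that(1)] that(2)] pair[OF that(1)] that(3,4)
      by auto
  qed
  have "inj_on (\<phi> (ch i)) (V (ch i)) \<and> Bx i \<subseteq> V (ch i)" if "i \<in> I" for i
    using chart pair BxV that by (meson homeomorphism_apply1 inj_on_inverseI)
  then have disj: "disjoint ((\<lambda>i. \<phi> (ch i) ` Bx i) ` {i\<in>I. key i = \<kappa>})" for \<kappa>
    unfolding Bx_def key_def by (rule disjoint_chart_cell_images[OF \<open>s > 0\<close>])
  have diam: "dist v v' \<le> D" if i: "i \<in> I" and vv': "v \<in> X \<inter> \<phi> (ch i) ` Bx i" "v' \<in> X \<inter> \<phi> (ch i) ` Bx i"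
    for i v v'
  proof -
    obtain x x' where x: "x \<in> Bx i" "x' \<in> Bx i" "v = \<phi> (ch i) x" "v' = \<phi> (ch i) x'" using vv' by blast
    then have "dist x x' \<le> 3 / 2 * s * DIM('b)"
      using cell_box_diameter box_subset_cbox unfolding Bx_def by blast
    moreover have "x \<in> cball (c (ch i)) (2 * r (ch i))" "x' \<in> cball (c (ch i)) (2 * r (ch i))"
      using BV(1)[OF i] closure_subset x(1,2) by blast+
    ultimately show ?thesis using unif[of "ch i" x x'] pair[OF i] x(3,4) by simp
  qed
  have "\<exists>\<Phi> \<Phi>'. homeomorphism X X \<Phi> \<Phi>' \<and> (\<forall>i\<in>I. \<Phi> (a i) = b i)
      \<and> (\<forall>z\<in>X. dist (\<Phi> z) z \<le> card (key ` I) * D)"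
    by (rule homeomorphism_moving_points_grouped[where S = "\<lambda>i. \<phi> (ch i) ` Bx i",
        OF I(1) _ I(2-4) disj _ \<open>0 \<le> D\<close>]) (fact stage, fact diam)
  then obtain \<Phi> \<Phi>' where "homeomorphism X X \<Phi> \<Phi>'" "\<forall>i\<in>I. \<Phi> (a i) = b i"
      "\<forall>z\<in>X. dist (\<Phi> z) z \<le> card (key ` I) * D"
    by blast
  moreover have "card (key ` I) \<le> card (P \<times> Pow (Basis :: 'b set))"
    using pair \<open>finite P\<close> by (intro card_mono) (auto simp: key_def)
  then have "card (key ` I) \<le> card P * 2 ^ DIM('b)"
    by (simp add: card_cartesian_product card_Pow)
  then have "real (card (key ` I)) \<le> real (card P * 2 ^ DIM('b))" by (rule of_nat_mono)
  then have "card (key ` I) * D \<le> card P * 2 ^ DIM('b) * D"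
    using \<open>0 \<le> D\<close> by (intro mult_right_mono) simp_all
  ultimately show ?thesis by (meson order_trans)
qed

lemma manifold_homeomorphism_moving_points_disjoint:
  fixes X :: "'a::metric_space set"
  assumes X: "compact X" "is_manifold_dim X TYPE('b::euclidean_space)" "DIM('b) \<ge> 2" and "\<delta> > 0"
  obtains \<eta> where "\<eta> > 0" "\<And>I a b. finite I \<Longrightarrow> \<forall>i\<in>I. a i \<in> X \<and> b i \<in> X \<and> dist (a i) (b i) < \<eta> \<Longrightarrow>
    inj_on a I \<Longrightarrow> inj_on b I \<Longrightarrow> \<forall>i\<in>I. \<forall>j\<in>I. i \<noteq> j \<longrightarrow> a i \<noteq> b j \<Longrightarrow>
    \<exists>\<Phi> \<Phi>'. homeomorphism X X \<Phi> \<Phi>' \<and> (\<forall>i\<in>I. \<Phi> (a i) = b i) \<and> (\<forall>z\<in>X. dist (\<Phi> z) z \<le> \<delta>)"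
proof -
  obtain P and \<phi> :: "'a \<Rightarrow> 'b \<Rightarrow> 'a" and \<psi> V U c r \<epsilon> where P: "finite P" "\<epsilon> > 0"
    and chart: "\<And>p. p \<in> P \<Longrightarrow> homeomorphism (V p) (U p) (\<phi> p) (\<psi> p) \<and> openin (top_of_set X) (U p) \<and> r p > 0
      \<and> cball (c p) (2 * r p) \<subseteq> V p"
    and leb: "\<And>x. x \<in> X \<Longrightarrow> \<exists>p\<in>P. X \<inter> ball x \<epsilon> \<subseteq> \<phi> p ` ball (c p) (r p)"
    by (rule compact_manifold_finite_atlas[OF X(1,2)]) blast
  text \<open>\<open>D\<close> bounds the displacement caused by one group of moves.\<close>
  define M :: real where "M = card P * 2 ^ DIM('b)"
  define D where "D = \<delta> / (M + 1)"
  have "M \<ge> 0" by (simp add: M_def)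
  then have "D > 0" "M / (M + 1) \<le> 1" using \<open>\<delta> > 0\<close> by (simp_all add: D_def)
  then have D: "D > 0" "card P * 2 ^ DIM('b) * D \<le> \<delta>"
    using mult_left_mono[of "M / (M + 1)" 1 \<delta>] \<open>\<delta> > 0\<close> by (simp_all add: D_def M_def mult.commute)
  have "r p > 0 \<and> continuous_on (cball (c p) (2 * r p)) (\<phi> p)" if "p \<in> P" for p
    using chart[OF that] continuous_on_subset[OF homeomorphism_cont1] by blast
  then obtain s where s: "s > 0" "\<And>p. p \<in> P \<Longrightarrow> 3 / 2 * s * DIM('b) \<le> r p"
    and unif: "\<And>p v v'. p \<in> P \<Longrightarrow> v \<in> cball (c p) (2 * r p) \<Longrightarrow> v' \<in> cball (c p) (2 * r p) \<Longrightarrow>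
      dist v v' \<le> 3 / 2 * s * DIM('b) \<Longrightarrow> dist (\<phi> p v) (\<phi> p v') \<le> D"
    by (rule chart_cell_mesh[OF P(1) D(1)]) blast+
  have "homeomorphism (V p) (U p) (\<phi> p) (\<psi> p) \<and> cball (c p) (r p) \<subseteq> V p" if "p \<in> P" for p
    using chart[OF that] by (auto intro: order_trans[OF subset_cball[of "r p" "2 * r p"]])
  moreover have "s / 4 > 0" using s(1) by simp
  ultimately obtain \<eta> where "\<eta> > 0" and \<eta>: "\<And>p z z'. p \<in> P \<Longrightarrow> z \<in> \<phi> p ` cball (c p) (r p) \<Longrightarrow>
      z' \<in> \<phi> p ` cball (c p) (r p) \<Longrightarrow> dist z' z < \<eta> \<Longrightarrow> dist (\<psi> p z') (\<psi> p z) < s / 4"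
    by (rule chart_inverse_uniform[OF P(1)]) blast+
  show ?thesis
  proof (rule that[of "min \<epsilon> \<eta>"])
    show "min \<epsilon> \<eta> > 0" using \<open>\<epsilon> > 0\<close> \<open>\<eta> > 0\<close> by simp
    fix I and a b :: "'c \<Rightarrow> 'a"
    assume I: "finite I" "inj_on a I" "inj_on b I" "\<forall>i\<in>I. \<forall>j\<in>I. i \<noteq> j \<longrightarrow> a i \<noteq> b j"
      and ab: "\<forall>i\<in>I. a i \<in> X \<and> b i \<in> X \<and> dist (a i) (b i) < min \<epsilon> \<eta>"
    have "\<forall>i\<in>I. \<exists>p\<in>P. X \<inter> ball (a i) \<epsilon> \<subseteq> \<phi> p ` ball (c p) (r p)" using leb ab by blast
    then obtain ch where ch: "\<And>i. i \<in> I \<Longrightarrow> ch i \<in> P \<and> X \<inter> ball (a i) \<epsilon> \<subseteq> \<phi> (ch i) ` ball (c (ch i)) (r (ch i))"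
      by metis
    have pair: "ch i \<in> P \<and> \<psi> (ch i) (a i) \<in> ball (c (ch i)) (r (ch i)) \<and> dist (\<psi> (ch i) (a i)) (\<psi> (ch i) (b i)) < s / 4
        \<and> a i = \<phi> (ch i) (\<psi> (ch i) (a i)) \<and> b i = \<phi> (ch i) (\<psi> (ch i) (b i))" if "i \<in> I" for i
    proof -
      define p where "p = ch i"
      have p: "p \<in> P" "X \<inter> ball (a i) \<epsilon> \<subseteq> \<phi> p ` ball (c p) (r p)" using ch[OF that] by (auto simp: p_def)
      have "a i \<in> X \<inter> ball (a i) \<epsilon>" "b i \<in> X \<inter> ball (a i) \<epsilon>" using ab that \<open>\<epsilon> > 0\<close> by auto
      then obtain va vb where v: "va \<in> ball (c p) (r p)" "a i = \<phi> p va" "vb \<in> ball (c p) (r p)" "b i = \<phi> p vb"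
        using p(2) by blast
      moreover have "ball (c p) (r p) \<subseteq> V p" using chart[OF p(1)] by (auto simp: subset_iff)
      ultimately have "\<psi> p (a i) = va" "\<psi> p (b i) = vb"
        using chart[OF p(1)] by (auto simp: homeomorphism_apply1 subset_iff)
      moreover have "dist (\<psi> p (b i)) (\<psi> p (a i)) < s / 4"
        using \<eta>[OF p(1), of "a i" "b i"] v ab that by (auto simp: dist_commute)
      ultimately show ?thesis using p(1) v unfolding p_def by (simp add: dist_commute)
    qed
    have "\<exists>\<Phi> \<Phi>'. homeomorphism X X \<Phi> \<Phi>' \<and> (\<forall>i\<in>I. \<Phi> (a i) = b i)
        \<and> (\<forall>z\<in>X. dist (\<Phi> z) z \<le> card P * 2 ^ DIM('b) * D)"
      using chart s(2) \<open>D > 0\<close> by (intro homeomorphism_moving_points_atlas[OF X(3) P(1) s(1) _ _ unif I pair]) auto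
    then show "\<exists>\<Phi> \<Phi>'. homeomorphism X X \<Phi> \<Phi>' \<and> (\<forall>i\<in>I. \<Phi> (a i) = b i) \<and> (\<forall>z\<in>X. dist (\<Phi> z) z \<le> \<delta>)"
      using D(2) by (meson order_trans)
  qed
qed

lemma manifold_infinite_ball:
  fixes X :: "'a::metric_space set"
  assumes "is_manifold_dim X TYPE('b::euclidean_space)" "x \<in> X" "r > 0"
  shows "infinite (X \<inter> ball x r)"
proof
  assume fin: "finite (X \<inter> ball x r)"
  obtain U and V :: "'b set" where UV: "openin (top_of_set X) U" "x \<in> U" "open V" "V homeomorphic U"
    using assms unfolding is_manifold_dim_def by blast
  then obtain \<phi> \<psi> where "homeomorphism U V \<psi> \<phi>" unfolding homeomorphic_def using homeomorphism_symD by blast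
  moreover have "openin (top_of_set U) (U \<inter> ball x r)" by (simp add: openin_open_Int)
  ultimately have "openin (top_of_set V) (\<psi> ` (U \<inter> ball x r))" by (rule homeomorphism_imp_open_map)
  then have "open (\<psi> ` (U \<inter> ball x r))" using UV(3) openin_open_trans by blast
  moreover have "finite (U \<inter> ball x r)"
    using openin_subset[OF UV(1)] by (intro finite_subset[OF _ fin]) auto
  then have "finite (\<psi> ` (U \<inter> ball x r))" by simp
  moreover have "\<psi> x \<in> \<psi> ` (U \<inter> ball x r)" using UV(2) assms(3) by auto
  ultimately show False using finite_imp_not_open by blast
qed

lemma finite_inj_choice_avoiding:
  assumes "finite I" "finite F" "\<And>i. i \<in> I \<Longrightarrow> infinite (A i)"
  shows "\<exists>q. inj_on q I \<and> (\<forall>i\<in>I. q i \<in> A i \<and> q i \<notin> F)"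
  using assms
proof (induction I rule: finite_induct)
  case (insert i I)
  then obtain q where q: "inj_on q I" "\<forall>j\<in>I. q j \<in> A j \<and> q j \<notin> F" by blast
  have "infinite (A i - (F \<union> q ` I))" using insert by (simp add: Diff_infinite_finite)
  then obtain v where "v \<in> A i" "v \<notin> F" "v \<notin> q ` I" using infinite_imp_nonempty by blast
  then show ?case using q insert.hyps(2) by (intro exI[of _ "q(i := v)"]) (auto simp: inj_on_def)
qed simp

lemma manifold_homeomorphism_moving_points:
  fixes X :: "'a::metric_space set"
  assumes X: "compact X" "is_manifold_dim X TYPE('b::euclidean_space)" "DIM('b) \<ge> 2" and "\<delta> > 0"
  obtains \<eta> where "\<eta> > 0" "\<And>(I :: 'i set) a b. finite I \<Longrightarrow> \<forall>i\<in>I. a i \<in> X \<and> b i \<in> X \<and> dist (a i) (b i) < \<eta> \<Longrightarrow>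
    inj_on a I \<Longrightarrow> inj_on b I \<Longrightarrow>
    \<exists>\<Phi> \<Phi>'. homeomorphism X X \<Phi> \<Phi>' \<and> (\<forall>i\<in>I. \<Phi> (a i) = b i) \<and> (\<forall>z\<in>X. dist (\<Phi> z) z \<le> \<delta>)"
proof -
  obtain \<eta> where "\<eta> > 0" and move: "\<And>(I :: 'i set) a b. finite I \<Longrightarrow>
      \<forall>i\<in>I. a i \<in> X \<and> b i \<in> X \<and> dist (a i) (b i) < \<eta> \<Longrightarrow> inj_on a I \<Longrightarrow> inj_on b I \<Longrightarrow>
      \<forall>i\<in>I. \<forall>j\<in>I. i \<noteq> j \<longrightarrow> a i \<noteq> b j \<Longrightarrow>
      \<exists>\<Phi> \<Phi>'. homeomorphism X X \<Phi> \<Phi>' \<and> (\<forall>i\<in>I. \<Phi> (a i) = b i) \<and> (\<forall>z\<in>X. dist (\<Phi> z) z \<le> \<delta> / 2)"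
    by (rule manifold_homeomorphism_moving_points_disjoint[OF X, of "\<delta> / 2"]) (use \<open>\<delta> > 0\<close> in simp, blast)
  show ?thesis
  proof (rule that[of "\<eta> / 2"])
    show "\<eta> / 2 > 0" using \<open>\<eta> > 0\<close> by simp
    fix I :: "'i set" and a b
    assume I: "finite I" "inj_on a I" "inj_on b I" and ab: "\<forall>i\<in>I. a i \<in> X \<and> b i \<in> X \<and> dist (a i) (b i) < \<eta> / 2"
    text \<open>Route every pair through an intermediate point \<open>m i\<close> that is distinct from all \<open>a j\<close> and \<open>b j\<close>.\<close>
    have "finite (a ` I \<union> b ` I)" using I(1) by simp
    moreover have "infinite (X \<inter> ball (b i) (\<eta> / 2))" if "i \<in> I" for i
      using manifold_infinite_ball[OF X(2)] ab that \<open>\<eta> > 0\<close> by simp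
    ultimately obtain m where m: "inj_on m I" "\<forall>i\<in>I. m i \<in> X \<inter> ball (b i) (\<eta> / 2) \<and> m i \<notin> a ` I \<union> b ` I"
      using finite_inj_choice_avoiding[OF I(1), of _ "\<lambda>i. X \<inter> ball (b i) (\<eta> / 2)"] by blast
    have "dist (a i) (m i) < \<eta>" if "i \<in> I" for i
    proof -
      have "dist (a i) (b i) < \<eta> / 2" "dist (b i) (m i) < \<eta> / 2" using ab m(2) that by auto
      then show ?thesis using dist_triangle[of "a i" "m i" "b i"] by linarith
    qed
    then have "\<forall>i\<in>I. a i \<in> X \<and> m i \<in> X \<and> dist (a i) (m i) < \<eta>" using ab m(2) by blast
    moreover have "\<forall>i\<in>I. \<forall>j\<in>I. i \<noteq> j \<longrightarrow> a i \<noteq> m j" using m(2) by (metis UnCI imageI)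
    ultimately obtain \<Phi>1 \<Phi>1' where \<Phi>1: "homeomorphism X X \<Phi>1 \<Phi>1'" "\<forall>i\<in>I. \<Phi>1 (a i) = m i"
        "\<forall>z\<in>X. dist (\<Phi>1 z) z \<le> \<delta> / 2"
      using move[OF I(1) _ I(2) m(1)] by blast
    have "\<forall>i\<in>I. m i \<in> X \<and> b i \<in> X \<and> dist (m i) (b i) < \<eta>"
      using ab m(2) \<open>\<eta> > 0\<close> by (fastforce simp: dist_commute)
    moreover have "\<forall>i\<in>I. \<forall>j\<in>I. i \<noteq> j \<longrightarrow> m i \<noteq> b j" using m(2) by (metis UnCI imageI)
    ultimately obtain \<Phi>2 \<Phi>2' where \<Phi>2: "homeomorphism X X \<Phi>2 \<Phi>2'" "\<forall>i\<in>I. \<Phi>2 (m i) = b i"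
        "\<forall>z\<in>X. dist (\<Phi>2 z) z \<le> \<delta> / 2"
      using move[OF I(1) _ m(1) I(3)] by blast
    have "dist (\<Phi>2 (\<Phi>1 z)) z \<le> \<delta>" if "z \<in> X" for z
    proof -
      have "\<Phi>1 z \<in> X" using \<Phi>1(1) that by (auto simp: homeomorphism_def)
      then show ?thesis using \<Phi>1(3) \<Phi>2(3) that dist_triangle[of "\<Phi>2 (\<Phi>1 z)" z "\<Phi>1 z"] by fastforce
    qed
    then show "\<exists>\<Phi> \<Phi>'. homeomorphism X X \<Phi> \<Phi>' \<and> (\<forall>i\<in>I. \<Phi> (a i) = b i) \<and> (\<forall>z\<in>X. dist (\<Phi> z) z \<le> \<delta>)"
      using homeomorphism_compose[OF \<Phi>1(1) \<Phi>2(1)] \<Phi>1(2) \<Phi>2(2) by (intro exI[of _ "\<Phi>2 \<circ> \<Phi>1"] exI[of _ "\<Phi>1' \<circ> \<Phi>2'"]) auto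
  qed
qed

section \<open>Topologically stable points are shadowable\<close>

lemma manifold_injective_perturbation:
  fixes X :: "'a::metric_space set"
  assumes "is_manifold_dim X TYPE('b::euclidean_space)" "finite K" "\<And>k. k \<in> K \<Longrightarrow> p k \<in> X" "i \<in> K" "\<gamma> > 0"
  obtains q where "inj_on q K" "q i = p i" "\<And>k. k \<in> K \<Longrightarrow> q k \<in> X \<and> dist (q k) (p k) < \<gamma>"
proof -
  have "infinite (X \<inter> ball (p k) \<gamma>)" if "k \<in> K - {i}" for k
    using manifold_infinite_ball[OF assms(1) assms(3) assms(5)] that by simp
  then obtain q where q: "inj_on q (K - {i})" "\<forall>k\<in>K - {i}. q k \<in> X \<inter> ball (p k) \<gamma> \<and> q k \<notin> {p i}"
    using finite_inj_choice_avoiding[of "K - {i}" "{p i}" "\<lambda>k. X \<inter> ball (p k) \<gamma>"] assms(2) by blast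
  show ?thesis
  proof (rule that[of "q(i := p i)"])
    show "inj_on (q(i := p i)) K"
      using q assms(4) unfolding inj_on_def by (metis fun_upd_other fun_upd_same insert_Diff singletonI insertE)
    show "k \<in> K \<Longrightarrow> (q(i := p i)) k \<in> X \<and> dist ((q(i := p i)) k) (p k) < \<gamma>" for k
      using q assms(3,5) by (cases "k = i") (auto simp: dist_commute)
  qed simp
qed

lemma finite_pseudo_orbit_is_perturbed_orbit:
  fixes X :: "'a::metric_space set"
  assumes X: "compact X" "is_manifold_dim X TYPE('b::euclidean_space)" "DIM('b) \<ge> 2"
    and f: "is_homeo X f" and "\<delta> > 0"
  obtains \<eta> where "\<eta> > 0" "\<And>N xp. inj_on xp {- int N..int N} \<Longrightarrow> (\<And>n. \<bar>n\<bar> \<le> int N \<Longrightarrow> xp n \<in> X) \<Longrightarrow>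
    (\<And>n. - int N \<le> n \<Longrightarrow> n < int N \<Longrightarrow> dist (f (xp n)) (xp (n + 1)) < \<eta>) \<Longrightarrow>
    \<exists>g. is_homeo X g \<and> (\<forall>z\<in>X. dist (f z) (g z) \<le> \<delta>) \<and> (\<forall>n. \<bar>n\<bar> \<le> int N \<longrightarrow> iterz X g n (xp 0) = xp n)"
proof -
  obtain \<eta> where "\<eta> > 0" and move: "\<And>(I :: int set) a b. finite I \<Longrightarrow> \<forall>i\<in>I. a i \<in> X \<and> b i \<in> X \<and> dist (a i) (b i) < \<eta> \<Longrightarrow>
      inj_on a I \<Longrightarrow> inj_on b I \<Longrightarrow>
      \<exists>\<Phi> \<Phi>'. homeomorphism X X \<Phi> \<Phi>' \<and> (\<forall>i\<in>I. \<Phi> (a i) = b i) \<and> (\<forall>z\<in>X. dist (\<Phi> z) z \<le> \<delta>)"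
    by (rule manifold_homeomorphism_moving_points[OF X \<open>\<delta> > 0\<close>]) blast
  have hf: "homeomorphism X X f (inv_into X f)" by (rule is_homeo_homeomorphism_inv_into[OF f])
  show ?thesis
  proof (rule that[OF \<open>\<eta> > 0\<close>])
    fix N and xp :: "int \<Rightarrow> 'a"
    assume inj: "inj_on xp {- int N..int N}" and xp: "\<And>n. \<bar>n\<bar> \<le> int N \<Longrightarrow> xp n \<in> X"
      and pseudo: "\<And>n. - int N \<le> n \<Longrightarrow> n < int N \<Longrightarrow> dist (f (xp n)) (xp (n + 1)) < \<eta>"
    text \<open>Correct each step of the segment: move \<open>f (xp n)\<close> to \<open>xp (n + 1)\<close> and compose with \<open>f\<close>.\<close>
    define J where "J = {- int N..<int N}"
    have fX: "f z \<in> X" if "z \<in> X" for z using hf that by (metis homeomorphism_image1 imageI)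
    have xpJ: "xp n \<in> X" "xp (n + 1) \<in> X" if "n \<in> J" for n using xp that unfolding J_def by auto
    have "inj_on f X" using hf by (metis homeomorphism_apply1 inj_on_inverseI)
    then have "inj_on (f \<circ> xp) J"
      using inj xpJ(1) unfolding J_def by (intro comp_inj_on) (auto elim: inj_on_subset)
    moreover have "inj_on (xp \<circ> (\<lambda>n. n + 1)) J"
      using inj unfolding J_def by (intro comp_inj_on) (auto elim: inj_on_subset)
    moreover have "\<forall>n\<in>J. f (xp n) \<in> X \<and> xp (n + 1) \<in> X \<and> dist (f (xp n)) (xp (n + 1)) < \<eta>"
      using xpJ fX pseudo unfolding J_def by auto
    ultimately obtain \<Phi> \<Phi>' where \<Phi>: "homeomorphism X X \<Phi> \<Phi>'" "\<forall>n\<in>J. \<Phi> (f (xp n)) = xp (n + 1)"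
        "\<forall>z\<in>X. dist (\<Phi> z) z \<le> \<delta>"
      using move[of J "f \<circ> xp" "xp \<circ> (\<lambda>n. n + 1)"] unfolding J_def by auto
    have "homeomorphism X X (\<Phi> \<circ> f) (inv_into X f \<circ> \<Phi>')" by (rule homeomorphism_compose[OF hf \<Phi>(1)])
    then have g: "is_homeo X (\<Phi> \<circ> f)" by (rule homeomorphism_imp_is_homeo)
    moreover have "\<forall>z\<in>X. dist (f z) ((\<Phi> \<circ> f) z) \<le> \<delta>"
      using \<Phi>(3) hf by (auto simp: homeomorphism_def dist_commute)
    moreover have "iterz X (\<Phi> \<circ> f) n (xp 0) = xp n" if "\<bar>n\<bar> \<le> int N" for n
      by (rule iterz_finite_orbit_segment[OF g xp _ that]) (use \<Phi>(2) in \<open>auto simp: J_def\<close>)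
    ultimately show "\<exists>g. is_homeo X g \<and> (\<forall>z\<in>X. dist (f z) (g z) \<le> \<delta>) \<and>
        (\<forall>n. \<bar>n\<bar> \<le> int N \<longrightarrow> iterz X g n (xp 0) = xp n)" by blast
  qed
qed

lemma manifold_injective_pseudo_orbit_segment:
  fixes X :: "'a::metric_space set"
  assumes X: "compact X" "is_manifold_dim X TYPE('b::euclidean_space)" and f: "is_homeo X f"
    and "\<eta> > 0" "\<gamma> > 0"
  obtains \<delta> where "\<delta> > 0" "\<And>xs N. pseudo_orbit_through X f \<delta> x xs \<Longrightarrow> \<exists>xp. inj_on xp {- int N..int N} \<and> xp 0 = x
    \<and> (\<forall>n. \<bar>n\<bar> \<le> int N \<longrightarrow> xp n \<in> X \<and> dist (xp n) (xs n) < \<gamma>)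
    \<and> (\<forall>n. - int N \<le> n \<longrightarrow> n < int N \<longrightarrow> dist (f (xp n)) (xp (n + 1)) < \<eta>)"
proof -
  have "continuous_on X f" using is_homeo_homeomorphism_inv_into[OF f] by (rule homeomorphism_cont1)
  then have "uniformly_continuous_on X f" using X(1) by (rule compact_uniformly_continuous)
  moreover have "\<eta> / 3 > 0" using \<open>\<eta> > 0\<close> by simp
  ultimately obtain \<gamma>' where "\<gamma>' > 0" and \<gamma>': "\<forall>u\<in>X. \<forall>v\<in>X. dist v u < \<gamma>' \<longrightarrow> dist (f v) (f u) < \<eta> / 3"
    unfolding uniformly_continuous_on_def by blast
  show ?thesis
  proof (rule that[of "\<eta> / 3"])
    show "\<eta> / 3 > 0" using \<open>\<eta> > 0\<close> by simp
    fix xs N assume "pseudo_orbit_through X f (\<eta> / 3) x xs"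
    then have xs: "\<And>n. xs n \<in> X" "xs 0 = x" "\<And>n. dist (f (xs n)) (xs (n + 1)) < \<eta> / 3"
      unfolding pseudo_orbit_through_def by auto
    obtain xp where xp: "inj_on xp {- int N..int N}" "xp 0 = x"
        "\<And>n. n \<in> {- int N..int N} \<Longrightarrow> xp n \<in> X \<and> dist (xp n) (xs n) < min \<gamma>' (min \<gamma> (\<eta> / 3))"
      by (rule manifold_injective_perturbation[OF X(2), where K = "{- int N..int N}" and p = xs and i = 0
          and \<gamma> = "min \<gamma>' (min \<gamma> (\<eta> / 3))"]) (use xs \<open>\<gamma>' > 0\<close> \<open>\<gamma> > 0\<close> \<open>\<eta> > 0\<close> in auto)
    have "dist (f (xp n)) (xp (n + 1)) < \<eta>" if "- int N \<le> n" "n < int N" for n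
    proof -
      have "dist (f (xp n)) (f (xs n)) < \<eta> / 3" "dist (xp (n + 1)) (xs (n + 1)) < \<eta> / 3"
        using \<gamma>' xs(1) xp(3)[of n] xp(3)[of "n + 1"] that by auto
      then show ?thesis
        using xs(3)[of n] dist_triangle[of "f (xp n)" "xp (n + 1)" "f (xs n)"]
          dist_triangle[of "f (xs n)" "xp (n + 1)" "xs (n + 1)"] by (simp add: dist_commute)
    qed
    then show "\<exists>xp. inj_on xp {- int N..int N} \<and> xp 0 = x
        \<and> (\<forall>n. \<bar>n\<bar> \<le> int N \<longrightarrow> xp n \<in> X \<and> dist (xp n) (xs n) < \<gamma>)
        \<and> (\<forall>n. - int N \<le> n \<longrightarrow> n < int N \<longrightarrow> dist (f (xp n)) (xp (n + 1)) < \<eta>)"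
      using xp by (intro exI[of _ xp]) (auto simp: abs_le_iff)
  qed
qed

lemma topologically_stable_imp_finite_shadowing:
  fixes X :: "'a::metric_space set"
  assumes X: "compact X" "is_manifold_dim X TYPE('b::euclidean_space)" "DIM('b) \<ge> 2"
    and f: "is_homeo X f" and x: "x \<in> X" and ts: "topologically_stable_point X f x" and "\<epsilon> > 0"
  obtains \<delta> where "\<delta> > 0" "\<And>xs N. pseudo_orbit_through X f \<delta> x xs \<Longrightarrow>
    \<exists>y\<in>X. \<forall>n. \<bar>n\<bar> \<le> int N \<longrightarrow> dist (iterz X f n y) (xs n) \<le> \<epsilon>"
proof -
  have "\<epsilon> / 2 > 0" using \<open>\<epsilon> > 0\<close> by simp
  then obtain \<delta>0 where "\<delta>0 > 0" and stable: "\<forall>g. is_homeo X g \<and> (\<forall>z\<in>X. dist (f z) (g z) \<le> \<delta>0) \<longrightarrow>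
      (\<exists>h. continuous_on (closure (orbit X g x)) h \<and> h ` closure (orbit X g x) \<subseteq> X \<and>
        (\<forall>z\<in>closure (orbit X g x). f (h z) = h (g z)) \<and> (\<forall>z\<in>closure (orbit X g x). dist (h z) z \<le> \<epsilon> / 2))"
    using ts unfolding topologically_stable_point_def by blast
  obtain \<eta> where "\<eta> > 0" and realize: "\<And>N xp. inj_on xp {- int N..int N} \<Longrightarrow> (\<And>n. \<bar>n\<bar> \<le> int N \<Longrightarrow> xp n \<in> X) \<Longrightarrow>
      (\<And>n. - int N \<le> n \<Longrightarrow> n < int N \<Longrightarrow> dist (f (xp n)) (xp (n + 1)) < \<eta>) \<Longrightarrow>
      \<exists>g. is_homeo X g \<and> (\<forall>z\<in>X. dist (f z) (g z) \<le> \<delta>0) \<and> (\<forall>n. \<bar>n\<bar> \<le> int N \<longrightarrow> iterz X g n (xp 0) = xp n)"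
    by (rule finite_pseudo_orbit_is_perturbed_orbit[OF X f \<open>\<delta>0 > 0\<close>]) blast
  obtain \<delta> where "\<delta> > 0" and segment: "\<And>xs N. pseudo_orbit_through X f \<delta> x xs \<Longrightarrow>
      \<exists>xp. inj_on xp {- int N..int N} \<and> xp 0 = x \<and> (\<forall>n. \<bar>n\<bar> \<le> int N \<longrightarrow> xp n \<in> X \<and> dist (xp n) (xs n) < \<epsilon> / 2)
        \<and> (\<forall>n. - int N \<le> n \<longrightarrow> n < int N \<longrightarrow> dist (f (xp n)) (xp (n + 1)) < \<eta>)"
    by (rule manifold_injective_pseudo_orbit_segment[OF X(1,2) f \<open>\<eta> > 0\<close> \<open>\<epsilon> / 2 > 0\<close>]) blast
  show ?thesis
  proof (rule that[OF \<open>\<delta> > 0\<close>])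
    fix xs N assume "pseudo_orbit_through X f \<delta> x xs"
    then obtain xp where xp: "inj_on xp {- int N..int N}" "xp 0 = x"
        "\<And>n. \<bar>n\<bar> \<le> int N \<Longrightarrow> xp n \<in> X \<and> dist (xp n) (xs n) < \<epsilon> / 2"
        "\<And>n. - int N \<le> n \<Longrightarrow> n < int N \<Longrightarrow> dist (f (xp n)) (xp (n + 1)) < \<eta>"
      using segment by blast
    then obtain g where g: "is_homeo X g" "\<forall>z\<in>X. dist (f z) (g z) \<le> \<delta>0"
        "\<And>n. \<bar>n\<bar> \<le> int N \<Longrightarrow> iterz X g n x = xp n"
      using realize[OF xp(1)] by auto
    then obtain h where h: "h ` closure (orbit X g x) \<subseteq> X" "\<forall>z\<in>closure (orbit X g x). f (h z) = h (g z)"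
        "\<forall>z\<in>closure (orbit X g x). dist (h z) z \<le> \<epsilon> / 2"
      using stable by blast
    have x_in: "x \<in> closure (orbit X g x)" using iterz_in_closure_orbit[of X g 0 x] by simp
    have "dist (iterz X f n (h x)) (xs n) \<le> \<epsilon>" if "\<bar>n\<bar> \<le> int N" for n
    proof -
      have "iterz X f n (h x) = h (iterz X g n x)"
        using conjugacy_iterz[OF f g(1) compact_closure_orbit(2)[OF X(1) g(1) x] h(1) _ _ x_in]
          iterz_closure_orbit[OF X(1) g(1) x] h(2) by blast
      then have "iterz X f n (h x) = h (xp n)" using g(3)[OF that] by simp
      moreover have "xp n \<in> closure (orbit X g x)" using iterz_in_closure_orbit[of X g n x] g(3)[OF that] by simp
      ultimately show ?thesis using h(3) xp(3)[OF that] dist_triangle[of "h (xp n)" "xs n" "xp n"] by fastforce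
    qed
    moreover have "h x \<in> X" using h(1) x_in by auto
    ultimately show "\<exists>y\<in>X. \<forall>n. \<bar>n\<bar> \<le> int N \<longrightarrow> dist (iterz X f n y) (xs n) \<le> \<epsilon>" by blast
  qed
qed

lemma shadowing_of_finite_shadowing:
  fixes X :: "'a::metric_space set"
  assumes X: "compact X" and f: "is_homeo X f"
    and finite: "\<And>N::nat. \<exists>y\<in>X. \<forall>n. \<bar>n\<bar> \<le> int N \<longrightarrow> dist (iterz X f n y) (p n) \<le> e"
  shows "\<exists>y\<in>X. \<forall>n. dist (iterz X f n y) (p n) \<le> e"
proof -
  obtain y where y: "\<And>N. y N \<in> X" "\<And>N n. \<bar>n\<bar> \<le> int N \<Longrightarrow> dist (iterz X f n (y N)) (p n) \<le> e"
    using finite by metis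
  obtain l r where l: "l \<in> X" "strict_mono r" "(y \<circ> r) \<longlonglongrightarrow> l"
    using compact_imp_seq_compact[OF X] y(1) unfolding seq_compact_def by metis
  have "dist (iterz X f n l) (p n) \<le> e" for n
  proof (rule LIMSEQ_le_const2)
    have "(\<lambda>k. iterz X f n (y (r k))) \<longlonglongrightarrow> iterz X f n l"
      using l y(1) by (intro continuous_on_tendsto_compose[OF continuous_on_iterz[OF f]]) (auto simp: o_def)
    then show "(\<lambda>k. dist (iterz X f n (y (r k))) (p n)) \<longlonglongrightarrow> dist (iterz X f n l) (p n)"
      by (intro tendsto_dist tendsto_const)
    have "\<bar>n\<bar> \<le> int (r k)" if "nat \<bar>n\<bar> \<le> k" for k using seq_suble[OF l(2), of k] that by linarith
    then show "\<exists>M. \<forall>k\<ge>M. dist (iterz X f n (y (r k))) (p n) \<le> e" using y(2) by blast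
  qed
  then show ?thesis using l(1) by blast
qed

lemma topologically_stable_imp_shadowable:
  fixes X :: "'a::metric_space set"
  assumes X: "compact X" "is_manifold_dim X TYPE('b::euclidean_space)" "DIM('b) \<ge> 2"
    and f: "is_homeo X f" and x: "x \<in> X" and ts: "topologically_stable_point X f x"
  shows "shadowable_point X f x"
  unfolding shadowable_point_def
proof (intro allI impI)
  fix \<epsilon> :: real assume "\<epsilon> > 0"
  then have "\<epsilon> / 2 > 0" by simp
  obtain \<delta> where "\<delta> > 0" and finite: "\<And>xs N. pseudo_orbit_through X f \<delta> x xs \<Longrightarrow>
      \<exists>y\<in>X. \<forall>n. \<bar>n\<bar> \<le> int N \<longrightarrow> dist (iterz X f n y) (xs n) \<le> \<epsilon> / 2"
    by (rule topologically_stable_imp_finite_shadowing[OF X f x ts \<open>\<epsilon> / 2 > 0\<close>]) blast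
  have "\<exists>y\<in>X. \<forall>n. dist (iterz X f n y) (xs n) < \<epsilon>" if po: "pseudo_orbit_through X f \<delta> x xs" for xs
  proof -
    obtain y where "y \<in> X" "\<And>n. dist (iterz X f n y) (xs n) \<le> \<epsilon> / 2"
      using shadowing_of_finite_shadowing[OF X(1) f finite[OF po]] by blast
    moreover have "\<epsilon> / 2 < \<epsilon>" using \<open>\<epsilon> > 0\<close> by simp
    ultimately show ?thesis by (meson le_less_trans)
  qed
  then show "\<exists>\<delta>>0. \<forall>xs. pseudo_orbit_through X f \<delta> x xs \<longrightarrow> (\<exists>y\<in>X. \<forall>n. dist (iterz X f n y) (xs n) < \<epsilon>)"
    using \<open>\<delta> > 0\<close> by blast
qed

theorem corollary2p8:
  fixes X :: "'a::metric_space set" and f :: "'a \<Rightarrow> 'a" and x :: 'a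
  assumes "compact X"
    and "is_manifold_dim X TYPE('b::euclidean_space)"
    and "DIM('b) \<ge> 2"
    and "is_homeo X f"
    and "x \<in> X"
    and "minimally_expansive X f x"
  shows "shadowable_point X f x \<longleftrightarrow> topologically_stable_point X f x"
  using shadowable_imp_topologically_stable[OF assms(1,4,5,6)]
    topologically_stable_imp_shadowable[OF assms(1-5)] by blast

end
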